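(* Let $W_{-1}$ be the $2\pi$-periodic function given on $[-\pi,\pi]$ by $W_{-1}(x)=|\sin x|\sin^2(x/2)$ for $|x|\le\frac{2\pi}{3}$ and $W_{-1}(x)=\frac{3\sqrt3}{8}$ for $\frac{2\pi}3\le|x|\le\pi$. For $\theta\in(0,1)$ let $W_\theta=W_{-1}\widetilde W_\theta$, where $\widetilde W_\theta$ is the $2\pi$-periodic function equal to $\exp(C|x|/\theta)$ on $[-\pi,\pi]$ for a suitable large constant $C>0$. Then for any $0<\theta<\theta'<1$, if $\delta^*>0$ is small enough, the following holds. Let $0\le s_0\le s_1$, let $\eta$ be a given continuous function on $[s_0,s_1]\times\mathbb R$, let $x^*$ solve $$\frac{dx^*}{ds}=-\sin(x^*(s))+\int_{-\pi-x^*(s)}^0\eta(s,\bar y)\,d\bar y,\qquad x^*(s_0)=x^*_{s_0},$$ set $\Omega^*(s)=[-\pi-x^*(s),\pi-x^*(s)]$, $\Omega^*_{s_0}=\Omega^*(s_0)$, and assume $|x^*(s)|\le\delta^*$ and $\|\eta(s,\cdot)\|_{L^\infty(\Omega^*(s))}\le\delta^*$ for $s\in[s_0,s_1]$. Denote by $\bar S(s,s_0)u_0$ the solution of $$\partial_su-2\cos(y)u+\sin(y)\partial_yu+\Big(\int_0^y\eta(s,\bar y)\,d\bar y\Big)\partial_yu=0\ \text{ on }\Omega^*(s),\ s\in[s_0,s_1],\qquad u(s_0)=u_0\ \text{on }\Omega^*_{s_0}.$$ Then for all $s\in[s_0,s_1]$, $$\Big\|\frac{\bar S(s,s_0)u_0}{W_\theta}\Big\|_{L^\infty(\Omega^*(s))}\le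 e^{-(1-\theta')(s-s_0)}\Big\|\frac{u_0}{W_\theta}\Big\|_{L^\infty(\Omega^*_{s_0})}.$$
   Context: $\Omega^*(s)$ is the image of $\Omega^*_{s_0}$ under the characteristic flow $\frac{dY}{ds}=\sin Y+\int_0^Y\eta(s,\bar y)d\bar y$. The constant $C$ in the weight is chosen large enough, independently of $\theta,\theta'$. *)

theory Defs
  imports "HOL-Analysis.Analysis"
begin

definition red2pi :: "real \<Rightarrow> real" where
  "red2pi x = x - 2 * pi * of_int \<lfloor>(x + pi) / (2 * pi)\<rfloor>"

definition Wm1 :: "real \<Rightarrow> real" where
  "Wm1 x = (let z = red2pi x in
     if \<bar>z\<bar> \<le> 2 * pi / 3 then \<bar>sin z\<bar> * (sin (z / 2))^2 else 3 * sqrt 3 / 8)"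

definition Wtilde :: "real \<Rightarrow> real \<Rightarrow> real \<Rightarrow> real" where
  "Wtilde C \<theta> x = exp (C * \<bar>red2pi x\<bar> / \<theta>)"

definition Wt :: "real \<Rightarrow> real \<Rightarrow> real \<Rightarrow> real" where
  "Wt C \<theta> x = Wm1 x * Wtilde C \<theta> x"

definition oint :: "real \<Rightarrow> real \<Rightarrow> (real \<Rightarrow> real) \<Rightarrow> real" where
  "oint a b f = (if a \<le> b then integral {a..b} f else - integral {b..a} f)"

definition charac :: "(real \<Rightarrow> real \<Rightarrow> real) \<Rightarrow> real \<Rightarrow> real \<Rightarrow> (real \<Rightarrow> real) \<Rightarrow> bool" where
  "charac \<eta> s0 s1 Y \<longleftrightarrow>
     (\<forall>s\<in>{s0..s1}. (Y has_real_derivative (sin (Y s) + oint 0 (Y s) (\<eta> s))) (at s within {s0..s1}))"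

text \<open>Omega*(s): image of Omega*_{s0} under the characteristic flow.\<close>
definition Omega_star :: "(real \<Rightarrow> real \<Rightarrow> real) \<Rightarrow> real \<Rightarrow> real \<Rightarrow> real set \<Rightarrow> real \<Rightarrow> real set" where
  "Omega_star \<eta> s0 s1 \<Omega>0 s = {Y s | Y. charac \<eta> s0 s1 Y \<and> Y s0 \<in> \<Omega>0}"

text \<open>u is the solution Sbar(s,s0)u0 of the transport equation on the flowed domain, expressed along
  characteristics: d/ds u(s,Y(s)) = 2 cos(Y(s)) u(s,Y(s)), u(s0,.) = u0.\<close>
definition is_Sbar_solution ::
  "(real \<Rightarrow> real \<Rightarrow> real) \<Rightarrow> real \<Rightarrow> real \<Rightarrow> real set \<Rightarrow> (real \<Rightarrow> real) \<Rightarrow> (real \<Rightarrow> real \<Rightarrow> real) \<Rightarrow> bool" where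
  "is_Sbar_solution \<eta> s0 s1 \<Omega>0 u0 u \<longleftrightarrow>
     (\<forall>Y. charac \<eta> s0 s1 Y \<and> Y s0 \<in> \<Omega>0 \<longrightarrow>
        u s0 (Y s0) = u0 (Y s0) \<and>
        (\<forall>s\<in>{s0..s1}. ((\<lambda>\<tau>. u \<tau> (Y \<tau>)) has_real_derivative (2 * cos (Y s) * u s (Y s)))
                          (at s within {s0..s1})))"

end

theory Submission
  imports Defs
begin

text \<open>Along a characteristic \<open>Y\<close> issuing from \<open>\<Omega>*_{s0}\<close> the solution is
  \<open>u(s, Y s) = u0(Y s0) exp (\<integral>_{s0}^s 2 cos Y)\<close>, so the estimate reduces to the monotonicity of
  \<open>W_\<theta>(Y s) exp (-(1 - \<theta>') (s - s0) - \<integral>_{s0}^s 2 cos Y)\<close>. On each of the pieces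
  \<open>\<bar>Y\<bar> \<le> 2pi/3\<close>, \<open>2pi/3 \<le> \<bar>Y\<bar> \<le> pi\<close> and \<open>pi \<le> \<bar>Y\<bar> \<le> pi + 1/2\<close> of the weight this is a
  differential inequality, which holds once the perturbation \<open>\<integral>_0^Y \<eta>\<close> of the drift \<open>sin Y\<close> is
  at most \<open>\<delta> \<bar>Y\<bar>\<close> with \<open>\<delta> \<le> \<theta> \<theta>' / (100 C)\<close>. Characteristics cannot leave
  \<open>\<bar>Y\<bar> \<le> pi + 1/2\<close>, where \<open>sin Y\<close> points inwards.

  The hypothesis on \<open>\<eta>\<close> is only an almost-everywhere bound on \<open>\<Omega>*(s)\<close>. By continuity it becomes
  a pointwise bound on the segment between 0 and \<open>Y s\<close>, because that segment lies in \<open>\<Omega>*(s)\<close>: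
  the characteristic through any of its points stays, by uniqueness, between \<open>Y\<close> and the
  stationary characteristic 0. Finally, the exceptional set of the conclusion is the image under
  the time-\<open>s\<close> flow of the null set where the initial bound fails; the flow is Lipschitz by
  Gronwall's inequality, so this image is null as well.\<close>

section \<open>Real functions of one variable\<close>

lemma deriv_nonneg_imp_mono_within:
  fixes f f' :: "real \<Rightarrow> real"
  assumes der: "\<And>t. t \<in> {a..b} \<Longrightarrow> (f has_real_derivative f' t) (at t within {a..b})"
    and nonneg: "\<And>t. t \<in> {a..b} \<Longrightarrow> 0 \<le> f' t"
    and xy: "a \<le> x" "x \<le> y" "y \<le> b"
  shows "f x \<le> f y"
proof -
  have "\<exists>z\<in>{x..y}. f y - f x = (\<lambda>h. h * f' z) (y - x)"
  proof (rule mvt_very_simple)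
    fix t assume "x \<le> t" "t \<le> y"
    then have "(f has_real_derivative f' t) (at t within {x..y})"
      using der[of t] xy by (auto intro: has_field_derivative_subset)
    then show "(f has_derivative (\<lambda>h. h * f' t)) (at t within {x..y})"
      by (simp add: has_field_derivative_def mult_commute_abs)
  qed (use xy in simp)
  then obtain z where "z \<in> {x..y}" "f y - f x = (y - x) * f' z" by auto
  with nonneg[of z] xy show ?thesis by (smt (verit) atLeastAtMost_iff mult_nonneg_nonneg)
qed

lemma le_on_interval_if_no_upcrossing:
  fixes f :: "real \<Rightarrow> real"
  assumes cont: "continuous_on {a..b} f" and "f a \<le> c"
    and no_up: "\<And>t. t \<in> {a..<b} \<Longrightarrow> f t = c \<Longrightarrow> eventually (\<lambda>\<tau>. f \<tau> \<le> c) (at t within {t<..b})"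
    and y: "y \<in> {a..b}"
  shows "f y \<le> c"
proof (rule ccontr)
  assume "\<not> f y \<le> c"
  define S where "S = {\<tau>\<in>{a..y}. f \<tau> \<le> c}"
  define t1 where "t1 = Sup S"
  have "a \<in> S" "bdd_above S" using assms by (auto simp: S_def bdd_above_def)
  have cont_y: "continuous_on {a..y} f" using cont y by (auto intro: continuous_on_subset)
  have "closed S"
    using continuous_closed_preimage[OF cont_y, of "{..c}"] by (simp add: S_def vimage_def Int_def)
  then have "t1 \<in> S" unfolding t1_def using \<open>a \<in> S\<close> \<open>bdd_above S\<close> by (intro closed_contains_Sup) auto
  then have t1: "a \<le> t1" "t1 < y" "f t1 \<le> c" using \<open>\<not> f y \<le> c\<close> by (auto simp: S_def less_le)
  have above: "c < f \<tau>" if "\<tau> \<in> {t1<..y}" for \<tau>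
    using that cSup_upper[OF _ \<open>bdd_above S\<close>, of \<tau>] t1 by (force simp: S_def t1_def)
  obtain x where x: "t1 \<le> x" "x \<le> y" "f x = c"
    using IVT'[of f t1 c y] t1 \<open>\<not> f y \<le> c\<close> continuous_on_subset[OF cont_y, of "{t1..y}"] by auto
  then have "f t1 = c" using above[of x] by (cases "x = t1") auto
  then have "eventually (\<lambda>\<tau>. f \<tau> \<le> c) (at t1 within {t1<..b})"
    using no_up[of t1] t1 y by auto
  then obtain d where d: "d > 0" "\<And>\<tau>. \<tau> \<in> {t1<..b} \<Longrightarrow> \<tau> \<noteq> t1 \<Longrightarrow> dist \<tau> t1 < d \<Longrightarrow> f \<tau> \<le> c"
    by (auto simp: eventually_at)
  define \<tau> where "\<tau> = min y (t1 + d/2)"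
  have "\<tau> \<in> {t1<..y}" "f \<tau> \<le> c" using d t1 y by (auto simp: \<tau>_def dist_real_def)
  then show False using above by force
qed

lemma locally_right_nondecreasing_imp_mono:
  fixes g :: "real \<Rightarrow> real"
  assumes "continuous_on {a..b} g"
    and loc: "\<And>t. t \<in> {a..<b} \<Longrightarrow> eventually (\<lambda>\<tau>. g t \<le> g \<tau>) (at t within {t<..b})"
    and "a \<le> x" "x \<le> y" "y \<le> b"
  shows "g x \<le> g y"
proof -
  have "- g y \<le> - g x"
  proof (rule le_on_interval_if_no_upcrossing[where f = "\<lambda>t. - g t" and a = x and b = b])
    show "continuous_on {x..b} (\<lambda>t. - g t)"
      by (intro continuous_intros continuous_on_subset[OF assms(1)]) (use assms in auto)
    fix t assume "t \<in> {x..<b}" "- g t = - g x"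
    then show "eventually (\<lambda>\<tau>. - g \<tau> \<le> - g x) (at t within {t<..b})"
      using loc[of t] assms by (auto elim: eventually_mono)
  qed (use assms in auto)
  then show ?thesis by simp
qed

lemma has_real_derivative_pos_eventually_right:
  fixes f :: "real \<Rightarrow> real"
  assumes "(f has_real_derivative l) (at t within {a..b})" "0 < l" "t \<in> {a..b}"
  shows "eventually (\<lambda>\<tau>. f t < f \<tau>) (at t within {t<..b})"
proof -
  obtain d where d: "d > 0" "\<And>h. h > 0 \<Longrightarrow> t + h \<in> {a..b} \<Longrightarrow> h < d \<Longrightarrow> f t < f (t + h)"
    using has_real_derivative_pos_inc_right[OF assms(1,2)] by blast
  show ?thesis unfolding eventually_at
  proof (intro exI[of _ d] conjI ballI impI)
    fix x assume "x \<in> {t<..b}" "x \<noteq> t \<and> dist x t < d"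
    then show "f t < f x" using d(2)[of "x - t"] assms(3) by (auto simp: dist_real_def)
  qed (use d in auto)
qed

lemma has_real_derivative_neg_eventually_right:
  fixes f :: "real \<Rightarrow> real"
  assumes "(f has_real_derivative l) (at t within {a..b})" "l < 0" "t \<in> {a..b}"
  shows "eventually (\<lambda>\<tau>. f \<tau> < f t) (at t within {t<..b})"
  using has_real_derivative_pos_eventually_right[OF DERIV_minus[OF assms(1)]] assms(2,3) by simp

lemma AE_not_in_Icc_imp_le:
  fixes c d :: real
  assumes "AE x in lborel. x \<notin> {c..d}"
  shows "d \<le> c"
proof -
  have "emeasure lborel {c..d} = 0" using assms by (subst (asm) AE_iff_measurable) auto
  then show ?thesis by (simp add: emeasure_lborel_Icc_eq split: if_splits)
qed

lemma AE_lborel_iff_negligible: "(AE x in lborel. P x) \<longleftrightarrow> negligible {x. \<not> P x}"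
proof
  assume "AE x in lborel. P x"
  then obtain N where N: "{x. \<not> P x} \<subseteq> N" "N \<in> null_sets lborel"
    by (auto elim!: AE_E simp: null_sets_def)
  then have "negligible N" by (simp add: negligible_iff_null_sets null_sets_completionI)
  then show "negligible {x. \<not> P x}" using N(1) by (rule negligible_subset)
next
  assume "negligible {x. \<not> P x}"
  then have "AE x in lebesgue. x \<notin> {x. \<not> P x}" by (intro AE_not_in) (simp add: negligible_iff_null_sets)
  then show "AE x in lborel. P x" by (simp add: AE_completion_iff)
qed

lemma AE_abs_le_imp_abs_le_continuous_on:
  fixes f :: "real \<Rightarrow> real"
  assumes "a < b" and cont: "continuous_on {a..b} f"
    and ae: "AE y in lborel. y \<in> {a..b} \<longrightarrow> \<bar>f y\<bar> \<le> B"
    and y: "y \<in> {a..b}"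
  shows "\<bar>f y\<bar> \<le> B"
proof (rule ccontr)
  assume "\<not> \<bar>f y\<bar> \<le> B"
  have "continuous (at y within {a..b}) (\<lambda>x. \<bar>f x\<bar>)"
    using cont y by (intro continuous_intros) (simp add: continuous_on_eq_continuous_within)
  then have "eventually (\<lambda>x. B < \<bar>f x\<bar>) (at y within {a..b})"
    using \<open>\<not> \<bar>f y\<bar> \<le> B\<close> by (auto simp: continuous_within not_le dest: order_tendstoD)
  then obtain e where "e > 0" "\<And>x. x \<in> {a..b} \<Longrightarrow> x \<noteq> y \<Longrightarrow> dist x y < e \<Longrightarrow> B < \<bar>f x\<bar>"
    by (auto simp: eventually_at)
  then have e: "B < \<bar>f x\<bar>" if "x \<in> {a..b}" "dist x y < e" for x
    using that \<open>\<not> \<bar>f y\<bar> \<le> B\<close> by (cases "x = y") auto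
  define c where "c = max a (y - e/2)"
  define d where "d = min b (y + e/2)"
  have "AE x in lborel. x \<notin> {c..d}"
    using ae by eventually_elim (use e \<open>e > 0\<close> in \<open>force simp: c_def d_def dist_real_def\<close>)
  then have "d \<le> c" by (rule AE_not_in_Icc_imp_le)
  moreover have "c < d" using \<open>a < b\<close> \<open>e > 0\<close> y by (auto simp: c_def d_def)
  ultimately show False by simp
qed

lemma abs_sin_diff_le: "\<bar>sin a - sin b\<bar> \<le> \<bar>a - b\<bar>" for a b :: real
proof -
  have "\<bar>sin a - sin b\<bar> = 2 * \<bar>sin ((a - b) / 2)\<bar> * \<bar>cos ((a + b) / 2)\<bar>"
    by (simp add: sin_diff_sin abs_mult)
  also have "\<dots> \<le> 2 * \<bar>(a - b) / 2\<bar> * 1"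
    by (intro mult_mono abs_sin_x_le_abs_x) auto
  finally show ?thesis by simp
qed

lemma sin_ge_third:
  fixes z :: real
  assumes "0 \<le> z" "z \<le> 2 * pi / 3"
  shows "z / 3 \<le> sin z"
proof (cases "z \<le> pi / 3")
  case True
  have "sin 0 - 0 / 3 \<le> sin z - z / 3"
  proof (rule deriv_nonneg_imp_mono_within[where f = "\<lambda>z. sin z - z / 3" and a = 0 and b = "pi / 3"])
    fix t :: real assume t: "t \<in> {0..pi/3}"
    show "((\<lambda>z. sin z - z / 3) has_real_derivative cos t - 1/3) (at t within {0..pi/3})"
      by (auto intro!: derivative_eq_intros)
    have "cos (pi/3) \<le> cos t" using t by (intro cos_monotone_0_pi_le) auto
    then show "0 \<le> cos t - 1/3" by (simp add: cos_60)
  qed (use assms True in auto)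
  then show ?thesis by simp
next
  case False
  have "\<bar>pi/2 - z\<bar> \<le> pi/6" unfolding abs_le_iff using False assms by auto
  then have "cos (pi/6) \<le> cos \<bar>pi/2 - z\<bar>" by (intro cos_monotone_0_pi_le) auto
  also have "\<dots> = sin z" by (simp add: sin_cos_eq)
  finally have "sqrt 3 / 2 \<le> sin z" by (simp add: cos_30)
  moreover have "1.7 \<le> sqrt 3" by (rule real_le_rsqrt) (simp add: power2_eq_square)
  moreover have "z / 3 \<le> 0.75" using assms pi_approx by simp
  ultimately show ?thesis by simp
qed

section \<open>Scalar ordinary differential equations\<close>

lemma gronwall_forward:
  fixes f f' :: "real \<Rightarrow> real"
  assumes der: "\<And>t. t \<in> {a..b} \<Longrightarrow> (f has_real_derivative f' t) (at t within {a..b})"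
    and growth: "\<And>t. t \<in> {a..b} \<Longrightarrow> f' t \<le> k * f t"
    and "a \<le> x" "x \<le> y" "y \<le> b"
  shows "f y \<le> exp (k * (y - x)) * f x"
proof -
  have "- (f x * exp (- k * (x - x))) \<le> - (f y * exp (- k * (y - x)))"
  proof (rule deriv_nonneg_imp_mono_within[where f = "\<lambda>t. - (f t * exp (- k * (t - x)))"
        and f' = "\<lambda>t. (k * f t - f' t) * exp (- k * (t - x))"])
    fix t assume t: "t \<in> {a..b}"
    show "((\<lambda>t. - (f t * exp (- k * (t - x)))) has_real_derivative
        (k * f t - f' t) * exp (- k * (t - x))) (at t within {a..b})"
      by (auto intro!: derivative_eq_intros der[OF t] simp: algebra_simps)
    show "0 \<le> (k * f t - f' t) * exp (- k * (t - x))" using growth[OF t] by simp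
  qed (use assms in auto)
  then have "f y * exp (- (k * (y - x))) \<le> f x" by simp
  then show ?thesis by (simp add: exp_minus divide_inverse[symmetric] pos_divide_le_eq mult.commute)
qed

lemma gronwall_backward:
  fixes f f' :: "real \<Rightarrow> real"
  assumes der: "\<And>t. t \<in> {a..b} \<Longrightarrow> (f has_real_derivative f' t) (at t within {a..b})"
    and decay: "\<And>t. t \<in> {a..b} \<Longrightarrow> - (k * f t) \<le> f' t"
    and "a \<le> x" "x \<le> y" "y \<le> b"
  shows "f x \<le> exp (k * (y - x)) * f y"
proof -
  have "f x * exp (k * (x - y)) \<le> f y * exp (k * (y - y))"
  proof (rule deriv_nonneg_imp_mono_within[where f = "\<lambda>t. f t * exp (k * (t - y))"
        and f' = "\<lambda>t. (f' t + k * f t) * exp (k * (t - y))"])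
    fix t assume t: "t \<in> {a..b}"
    show "((\<lambda>t. f t * exp (k * (t - y))) has_real_derivative
        (f' t + k * f t) * exp (k * (t - y))) (at t within {a..b})"
      by (auto intro!: derivative_eq_intros der[OF t] simp: algebra_simps)
    show "0 \<le> (f' t + k * f t) * exp (k * (t - y))" using decay[OF t] by simp
  qed (use assms in auto)
  then show ?thesis by (simp add: exp_diff field_simps)
qed

lemma gronwall_abs:
  fixes D D' :: "real \<Rightarrow> real"
  assumes der: "\<And>t. t \<in> {a..b} \<Longrightarrow> (D has_real_derivative D' t) (at t within {a..b})"
    and lip: "\<And>t. t \<in> {a..b} \<Longrightarrow> \<bar>D' t\<bar> \<le> L * \<bar>D t\<bar>"
    and t0: "t0 \<in> {a..b}" and t: "t \<in> {a..b}"
  shows "\<bar>D t\<bar> \<le> exp (L * \<bar>t - t0\<bar>) * \<bar>D t0\<bar>"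
proof -
  have sq_der: "((\<lambda>t. (D t)\<^sup>2) has_real_derivative 2 * D t * D' t) (at t within {a..b})"
    if "t \<in> {a..b}" for t
    by (auto intro!: derivative_eq_intros der[OF that])
  have sq_growth: "- (2 * L * (D t)\<^sup>2) \<le> 2 * D t * D' t \<and> 2 * D t * D' t \<le> 2 * L * (D t)\<^sup>2"
    if "t \<in> {a..b}" for t
  proof -
    have "\<bar>D t * D' t\<bar> \<le> \<bar>D t\<bar> * (L * \<bar>D t\<bar>)"
      unfolding abs_mult by (rule mult_left_mono[OF lip[OF that]]) simp
    also have "\<dots> = L * (D t)\<^sup>2" by (simp add: power2_eq_square)
    finally show ?thesis by (simp add: abs_le_iff)
  qed
  have "(D t)\<^sup>2 \<le> exp (2 * L * \<bar>t - t0\<bar>) * (D t0)\<^sup>2"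
  proof (cases "t0 \<le> t")
    case True
    have "(D t)\<^sup>2 \<le> exp (2 * L * (t - t0)) * (D t0)\<^sup>2"
      by (rule gronwall_forward[where f = "\<lambda>t. (D t)\<^sup>2", OF sq_der])
        (use True t0 t sq_growth in auto)
    then show ?thesis using True by simp
  next
    case False
    have "(D t)\<^sup>2 \<le> exp (2 * L * (t0 - t)) * (D t0)\<^sup>2"
      by (rule gronwall_backward[where f = "\<lambda>t. (D t)\<^sup>2", OF sq_der])
        (use False t0 t sq_growth in auto)
    then show ?thesis using False by simp
  qed
  also have "\<dots> = (exp (L * \<bar>t - t0\<bar>) * \<bar>D t0\<bar>)\<^sup>2"
    by (simp add: power_mult_distrib exp_double[symmetric] mult.assoc)
  finally show ?thesis
    using power2_le_imp_le[of "\<bar>D t\<bar>" "exp (L * \<bar>t - t0\<bar>) * \<bar>D t0\<bar>"] by simp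
qed

lemma ode_solution_unique:
  fixes G :: "real \<Rightarrow> real \<Rightarrow> real"
  assumes lip: "\<And>t x z. t \<in> {a..b} \<Longrightarrow> \<bar>G t x - G t z\<bar> \<le> L * \<bar>x - z\<bar>"
    and Z1: "\<And>t. t \<in> {a..b} \<Longrightarrow> (Z1 has_real_derivative G t (Z1 t)) (at t within {a..b})"
    and Z2: "\<And>t. t \<in> {a..b} \<Longrightarrow> (Z2 has_real_derivative G t (Z2 t)) (at t within {a..b})"
    and \<tau>: "\<tau> \<in> {a..b}" "Z1 \<tau> = Z2 \<tau>" and t: "t \<in> {a..b}"
  shows "Z1 t = Z2 t"
proof -
  have "\<bar>Z1 t - Z2 t\<bar> \<le> exp (L * \<bar>t - \<tau>\<bar>) * \<bar>Z1 \<tau> - Z2 \<tau>\<bar>"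
    by (rule gronwall_abs[where D = "\<lambda>t. Z1 t - Z2 t", OF DERIV_diff[OF Z1 Z2] lip \<tau>(1) t])
  then show ?thesis using \<tau>(2) by simp
qed

lemma ode_solutions_preserve_order:
  fixes G :: "real \<Rightarrow> real \<Rightarrow> real"
  assumes lip: "\<And>t x z. t \<in> {a..b} \<Longrightarrow> \<bar>G t x - G t z\<bar> \<le> L * \<bar>x - z\<bar>"
    and Z1: "\<And>t. t \<in> {a..b} \<Longrightarrow> (Z1 has_real_derivative G t (Z1 t)) (at t within {a..b})"
    and Z2: "\<And>t. t \<in> {a..b} \<Longrightarrow> (Z2 has_real_derivative G t (Z2 t)) (at t within {a..b})"
    and t: "t \<in> {a..b}" "Z1 t \<le> Z2 t" and \<tau>: "\<tau> \<in> {a..b}"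
  shows "Z1 \<tau> \<le> Z2 \<tau>"
proof (rule ccontr)
  assume "\<not> Z1 \<tau> \<le> Z2 \<tau>"
  have "continuous_on {a..b} (\<lambda>s. Z2 s - Z1 s)"
    by (rule DERIV_continuous_on[OF DERIV_diff[OF Z2 Z1]])
  then have "connected ((\<lambda>s. Z2 s - Z1 s) ` {a..b})" by (rule connected_continuous_image) simp
  then have "0 \<in> (\<lambda>s. Z2 s - Z1 s) ` {a..b}"
    by (rule connectedD_interval[of _ "Z2 \<tau> - Z1 \<tau>" "Z2 t - Z1 t"]) (use \<open>\<not> Z1 \<tau> \<le> Z2 \<tau>\<close> t \<tau> in auto)
  then obtain s where "s \<in> {a..b}" "Z1 s = Z2 s" by auto
  then have "Z1 \<tau> = Z2 \<tau>" using ode_solution_unique[OF lip Z1 Z2] \<tau> by blast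
  with \<open>\<not> Z1 \<tau> \<le> Z2 \<tau>\<close> show False by simp
qed

lemma ode_solution_between:
  fixes G :: "real \<Rightarrow> real \<Rightarrow> real"
  assumes lip: "\<And>t x z. t \<in> {a..b} \<Longrightarrow> \<bar>G t x - G t z\<bar> \<le> L * \<bar>x - z\<bar>"
    and Z1: "\<And>t. t \<in> {a..b} \<Longrightarrow> (Z1 has_real_derivative G t (Z1 t)) (at t within {a..b})"
    and Z2: "\<And>t. t \<in> {a..b} \<Longrightarrow> (Z2 has_real_derivative G t (Z2 t)) (at t within {a..b})"
    and Z: "\<And>t. t \<in> {a..b} \<Longrightarrow> (Z has_real_derivative G t (Z t)) (at t within {a..b})"
    and t: "t \<in> {a..b}" "Z1 t \<le> Z t" "Z t \<le> Z2 t" and \<tau>: "\<tau> \<in> {a..b}"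
  shows "Z1 \<tau> \<le> Z \<tau> \<and> Z \<tau> \<le> Z2 \<tau>"
  using ode_solutions_preserve_order[OF lip Z1 Z t(1,2) \<tau>] ode_solutions_preserve_order[OF lip Z Z2 t(1,3) \<tau>]
  by simp

lemma uniform_limit_if_geometric_increments:
  fixes \<phi> :: "nat \<Rightarrow> real \<Rightarrow> real"
  assumes "\<And>n t. t \<in> S \<Longrightarrow> \<bar>\<phi> (Suc n) t - \<phi> n t\<bar> \<le> M * (1/2)^n"
  obtains \<psi> where "uniform_limit S \<phi> \<psi> sequentially"
proof -
  have "uniform_limit S (\<lambda>n t. \<Sum>i<n. \<phi> (Suc i) t - \<phi> i t) (\<lambda>t. \<Sum>i. \<phi> (Suc i) t - \<phi> i t) sequentially"
    by (rule Weierstrass_m_test[where M = "\<lambda>n. M * (1/2)^n"])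
      (use assms in \<open>auto intro: summable_mult summable_geometric\<close>)
  then have "uniform_limit S (\<lambda>n t. \<phi> 0 t + (\<Sum>i<n. \<phi> (Suc i) t - \<phi> i t))
      (\<lambda>t. \<phi> 0 t + (\<Sum>i. \<phi> (Suc i) t - \<phi> i t)) sequentially"
    by (intro uniform_limit_intros)
  moreover have "(\<lambda>n t. \<phi> 0 t + (\<Sum>i<n. \<phi> (Suc i) t - \<phi> i t)) = \<phi>"
  proof (intro ext)
    fix n t show "\<phi> 0 t + (\<Sum>i<n. \<phi> (Suc i) t - \<phi> i t) = \<phi> n t"
      using sum_lessThan_telescope[of "\<lambda>i. \<phi> i t" n] by simp
  qed
  ultimately show ?thesis using that by auto
qed

lemma weighted_contraction_limit_fixed:
  fixes T :: "(real \<Rightarrow> real) \<Rightarrow> real \<Rightarrow> real"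
  assumes lim: "uniform_limit S \<phi> \<psi> sequentially" and \<phi>_Suc: "\<And>n. \<phi> (Suc n) = T (\<phi> n)"
    and \<phi>_cont: "\<And>n. continuous_on S (\<phi> n)" and \<psi>_cont: "continuous_on S \<psi>"
    and T_contr: "\<And>\<phi> \<psi> d t. continuous_on S \<phi> \<Longrightarrow> continuous_on S \<psi> \<Longrightarrow>
        (\<And>r. r \<in> S \<Longrightarrow> \<bar>\<phi> r - \<psi> r\<bar> \<le> d * w r) \<Longrightarrow> t \<in> S \<Longrightarrow> \<bar>T \<phi> t - T \<psi> t\<bar> \<le> d / 2 * w t"
    and w: "\<And>t. t \<in> S \<Longrightarrow> 1 \<le> w t \<and> w t \<le> E" and t: "t \<in> S"
  shows "T \<psi> t = \<psi> t"
proof -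
  have "\<bar>T \<psi> t - \<psi> t\<bar> \<le> 0 + e" if "e > 0" for e
  proof -
    define e' where "e' = e / (E + 1)"
    have "e' > 0" using w[OF t] \<open>e > 0\<close> by (simp add: e'_def)
    then obtain n where n: "\<forall>x\<in>S. dist (\<phi> n x) (\<psi> x) < e'" "\<forall>x\<in>S. dist (\<phi> (Suc n) x) (\<psi> x) < e'"
      using uniform_limitD[OF lim] unfolding eventually_sequentially by (meson le_Suc_eq order_refl)
    have "\<bar>\<psi> r - \<phi> n r\<bar> \<le> e' * w r" if "r \<in> S" for r
    proof -
      have "\<bar>\<psi> r - \<phi> n r\<bar> < e'" using n(1) that by (simp add: dist_real_def abs_minus_commute)
      moreover have "e' * 1 \<le> e' * w r" using w[OF that] \<open>e' > 0\<close> by (intro mult_left_mono) auto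
      ultimately show ?thesis by simp
    qed
    then have "\<bar>T \<psi> t - \<phi> (Suc n) t\<bar> \<le> e' / 2 * w t"
      unfolding \<phi>_Suc by (rule T_contr[OF \<psi>_cont \<phi>_cont _ t])
    also have "\<dots> \<le> e' / 2 * E" using w[OF t] \<open>e' > 0\<close> by simp
    finally have "\<bar>T \<psi> t - \<phi> (Suc n) t\<bar> \<le> e' / 2 * E" .
    moreover have "\<bar>\<phi> (Suc n) t - \<psi> t\<bar> < e'" using n(2) t by (simp add: dist_real_def)
    ultimately have "\<bar>T \<psi> t - \<psi> t\<bar> \<le> e' / 2 * E + e'" by (smt (verit))
    also have "\<dots> \<le> e' * (E + 1)" using w[OF t] \<open>e' > 0\<close> by (simp add: algebra_simps)
    also have "\<dots> = e" using w[OF t] by (simp add: e'_def)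
    finally show ?thesis by simp
  qed
  then show ?thesis using field_le_epsilon[of "\<bar>T \<psi> t - \<psi> t\<bar>" 0] by simp
qed

lemma weighted_contraction_fixpoint:
  fixes T :: "(real \<Rightarrow> real) \<Rightarrow> real \<Rightarrow> real"
  assumes "compact S"
    and T_cont: "\<And>\<phi>. continuous_on S \<phi> \<Longrightarrow> continuous_on S (T \<phi>)"
    and T_contr: "\<And>\<phi> \<psi> d t. continuous_on S \<phi> \<Longrightarrow> continuous_on S \<psi> \<Longrightarrow>
        (\<And>r. r \<in> S \<Longrightarrow> \<bar>\<phi> r - \<psi> r\<bar> \<le> d * w r) \<Longrightarrow> t \<in> S \<Longrightarrow> \<bar>T \<phi> t - T \<psi> t\<bar> \<le> d / 2 * w t"
    and w: "\<And>t. t \<in> S \<Longrightarrow> 1 \<le> w t \<and> w t \<le> E"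
  obtains \<psi> where "continuous_on S \<psi>" "\<And>t. t \<in> S \<Longrightarrow> T \<psi> t = \<psi> t"
proof -
  define \<phi> where "\<phi> n = (T ^^ n) (\<lambda>_. 0)" for n
  have \<phi>_Suc: "\<phi> (Suc n) = T (\<phi> n)" for n by (simp add: \<phi>_def)
  have \<phi>_cont: "continuous_on S (\<phi> n)" for n
    by (induction n) (simp_all add: \<phi>_def T_cont)
  have "bounded (\<phi> 1 ` S)"
    by (intro compact_imp_bounded compact_continuous_image \<phi>_cont \<open>compact S\<close>)
  then obtain K where "K > 0" and K: "\<And>t. t \<in> S \<Longrightarrow> \<bar>\<phi> 1 t\<bar> \<le> K"
    by (auto simp: bounded_pos)
  have step: "\<bar>\<phi> (Suc n) t - \<phi> n t\<bar> \<le> K * (1/2)^n * w t" if "t \<in> S" for n t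
    using that
  proof (induction n arbitrary: t)
    case 0
    have "K * 1 \<le> K * w t" using w[OF 0] \<open>K > 0\<close> by (intro mult_left_mono) auto
    with K[OF 0] show ?case by (simp add: \<phi>_def)
  next
    case (Suc n)
    have "\<bar>T (\<phi> (Suc n)) t - T (\<phi> n) t\<bar> \<le> K * (1/2)^n / 2 * w t"
      by (rule T_contr[OF \<phi>_cont \<phi>_cont Suc.IH Suc.prems])
    then show ?case by (simp add: \<phi>_Suc)
  qed
  have "\<bar>\<phi> (Suc n) t - \<phi> n t\<bar> \<le> K * E * (1/2)^n" if "t \<in> S" for n t
  proof -
    have "K * (1/2)^n * w t \<le> K * (1/2)^n * E" using w[OF that] \<open>K > 0\<close> by (intro mult_left_mono) auto
    then show ?thesis using step[OF that, of n] by (simp add: mult_ac)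
  qed
  then obtain \<psi> where lim: "uniform_limit S \<phi> \<psi> sequentially"
    by (rule uniform_limit_if_geometric_increments)
  have "continuous_on S \<psi>"
    by (rule uniform_limit_theorem[OF _ lim]) (simp_all add: \<phi>_cont)
  moreover have "T \<psi> t = \<psi> t" if "t \<in> S" for t
    using lim \<phi>_Suc \<phi>_cont \<open>continuous_on S \<psi>\<close> T_contr w that
    by (rule weighted_contraction_limit_fixed[where S = S and \<phi> = \<phi> and \<psi> = \<psi> and T = T and w = w and E = E])
  ultimately show ?thesis by (rule that)
qed

definition picard_op ::
    "(real \<Rightarrow> real \<Rightarrow> real) \<Rightarrow> real \<Rightarrow> real \<Rightarrow> real \<Rightarrow> (real \<Rightarrow> real) \<Rightarrow> real \<Rightarrow> real" where
  "picard_op G a t0 \<xi> \<phi> t = \<xi> + (integral {a..t} (\<lambda>r. G r (\<phi> r)) - integral {a..t0} (\<lambda>r. G r (\<phi> r)))"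

lemma continuous_on_picard_op:
  assumes "continuous_on {a..b} (\<lambda>t. G t (\<phi> t))"
  shows "continuous_on {a..b} (picard_op G a t0 \<xi> \<phi>)"
  unfolding picard_op_def
  by (intro continuous_intros indefinite_integral_continuous_1 integrable_continuous_real assms)

lemma abs_integral_le_exp_right:
  fixes h :: "real \<Rightarrow> real"
  assumes "t0 \<le> t" and h: "h integrable_on {t0..t}"
    and bound: "\<And>r. r \<in> {t0..t} \<Longrightarrow> \<bar>h r\<bar> \<le> L * d * exp (2 * L * (r - t0))"
  shows "\<bar>integral {t0..t} h\<bar> \<le> d / 2 * (exp (2 * L * (t - t0)) - 1)"
proof -
  have "((\<lambda>r. L * d * exp (2 * L * (r - t0))) has_integral
      d / 2 * exp (2 * L * (t - t0)) - d / 2 * exp (2 * L * (t0 - t0))) {t0..t}"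
    by (rule fundamental_theorem_of_calculus[OF assms(1)])
      (auto intro!: derivative_eq_intros simp: has_real_derivative_iff_has_vector_derivative[symmetric])
  then have exp_int: "((\<lambda>r. L * d * exp (2 * L * (r - t0))) has_integral
      d / 2 * (exp (2 * L * (t - t0)) - 1)) {t0..t}"
    by (simp add: right_diff_distrib)
  have "norm (integral {t0..t} h) \<le> integral {t0..t} (\<lambda>r. L * d * exp (2 * L * (r - t0)))"
    using bound by (intro integral_norm_bound_integral h has_integral_integrable[OF exp_int]) simp
  also have "\<dots> = d / 2 * (exp (2 * L * (t - t0)) - 1)" by (rule integral_unique[OF exp_int])
  finally show ?thesis by simp
qed

lemma abs_integral_le_exp_left:
  fixes h :: "real \<Rightarrow> real"
  assumes "t \<le> t0" and h: "h integrable_on {t..t0}"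
    and bound: "\<And>r. r \<in> {t..t0} \<Longrightarrow> \<bar>h r\<bar> \<le> L * d * exp (2 * L * (t0 - r))"
  shows "\<bar>integral {t..t0} h\<bar> \<le> d / 2 * (exp (2 * L * (t0 - t)) - 1)"
proof -
  have "\<bar>integral {- t0..- t} (\<lambda>x. h (- x))\<bar> \<le> d / 2 * (exp (2 * L * (- t - - t0)) - 1)"
  proof (rule abs_integral_le_exp_right)
    fix r assume "r \<in> {- t0..- t}"
    then show "\<bar>h (- r)\<bar> \<le> L * d * exp (2 * L * (r - - t0))" using bound[of "- r"] by (simp add: add.commute)
  qed (use assms in simp_all)
  then show ?thesis by simp
qed

text \<open>Measured in the weight \<open>exp (2 L \<bar>t - t0\<bar>)\<close>, the Picard operator is a contraction on the
  whole interval, whatever its length.\<close>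

lemma picard_op_contraction:
  fixes G :: "real \<Rightarrow> real \<Rightarrow> real"
  assumes t0: "t0 \<in> {a..b}"
    and contG: "\<And>\<phi>. continuous_on {a..b} \<phi> \<Longrightarrow> continuous_on {a..b} (\<lambda>t. G t (\<phi> t))"
    and lipG: "\<And>t x z. t \<in> {a..b} \<Longrightarrow> \<bar>G t x - G t z\<bar> \<le> L * \<bar>x - z\<bar>" and "0 \<le> L"
    and \<phi>: "continuous_on {a..b} \<phi>" and \<psi>: "continuous_on {a..b} \<psi>"
    and close: "\<And>r. r \<in> {a..b} \<Longrightarrow> \<bar>\<phi> r - \<psi> r\<bar> \<le> d * exp (2 * L * \<bar>r - t0\<bar>)"
    and t: "t \<in> {a..b}"
  shows "\<bar>picard_op G a t0 \<xi> \<phi> t - picard_op G a t0 \<xi> \<psi> t\<bar> \<le> d / 2 * exp (2 * L * \<bar>t - t0\<bar>)"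
proof -
  define h where "h r = G r (\<phi> r) - G r (\<psi> r)" for r
  have cont: "continuous_on {a..b} (\<lambda>r. G r (\<phi> r))" "continuous_on {a..b} (\<lambda>r. G r (\<psi> r))"
    "continuous_on {a..b} h"
    using contG[OF \<phi>] contG[OF \<psi>] by (simp_all add: h_def continuous_on_diff)
  have "f integrable_on {x..y}" if "continuous_on {a..b} f" "a \<le> x" "y \<le> b" for f :: "real \<Rightarrow> real" and x y
    by (rule integrable_continuous_real[OF continuous_on_subset[OF that(1)]]) (use that in auto)
  note int = this[OF cont(3)] this[OF cont(1)] this[OF cont(2)]
  have h_le: "\<bar>h r\<bar> \<le> L * d * exp (2 * L * \<bar>r - t0\<bar>)" if "r \<in> {a..b}" for r
    using order_trans[OF lipG[OF that] mult_left_mono[OF close[OF that] \<open>0 \<le> L\<close>]]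
    by (simp add: h_def mult_ac)
  have "0 \<le> d * exp (2 * L * \<bar>t - t0\<bar>)" using close[OF t] by linarith
  then have "0 \<le> d" by (simp add: zero_le_mult_iff)
  have diff: "picard_op G a t0 \<xi> \<phi> t - picard_op G a t0 \<xi> \<psi> t = integral {a..t} h - integral {a..t0} h"
    using t t0 int[of a t] int[of a t0] by (simp add: picard_op_def h_def[abs_def] integral_diff)
  show ?thesis
  proof (cases "t0 \<le> t")
    case True
    have "integral {a..t} h - integral {a..t0} h = integral {t0..t} h"
      using Henstock_Kurzweil_Integration.integral_combine[of a t0 t h] True t0 t int(1)[of a t] by simp
    moreover have "\<bar>integral {t0..t} h\<bar> \<le> d / 2 * (exp (2 * L * (t - t0)) - 1)"
    proof (rule abs_integral_le_exp_right)
      fix r assume "r \<in> {t0..t}"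
      then show "\<bar>h r\<bar> \<le> L * d * exp (2 * L * (r - t0))" using h_le[of r] t0 t by simp
    qed (use True t0 t int(1)[of t0 t] in auto)
    ultimately show ?thesis using diff True \<open>0 \<le> d\<close> by (simp add: right_diff_distrib)
  next
    case False
    have "integral {a..t} h - integral {a..t0} h = - integral {t..t0} h"
      using Henstock_Kurzweil_Integration.integral_combine[of a t t0 h] False t0 t int(1)[of a t0] by simp
    moreover have "\<bar>integral {t..t0} h\<bar> \<le> d / 2 * (exp (2 * L * (t0 - t)) - 1)"
    proof (rule abs_integral_le_exp_left)
      fix r assume "r \<in> {t..t0}"
      then show "\<bar>h r\<bar> \<le> L * d * exp (2 * L * (t0 - r))" using h_le[of r] t0 t by simp
    qed (use False t0 t int(1)[of t t0] in auto)
    ultimately show ?thesis using diff False \<open>0 \<le> d\<close> by (simp add: right_diff_distrib)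
  qed
qed

theorem picard_existence:
  fixes G :: "real \<Rightarrow> real \<Rightarrow> real"
  assumes t0: "t0 \<in> {a..b}" and "0 \<le> L"
    and contG: "\<And>\<phi>. continuous_on {a..b} \<phi> \<Longrightarrow> continuous_on {a..b} (\<lambda>t. G t (\<phi> t))"
    and lipG: "\<And>t x z. t \<in> {a..b} \<Longrightarrow> \<bar>G t x - G t z\<bar> \<le> L * \<bar>x - z\<bar>"
  obtains Y where "Y t0 = \<xi>" "\<And>t. t \<in> {a..b} \<Longrightarrow> (Y has_real_derivative G t (Y t)) (at t within {a..b})"
proof -
  have w: "1 \<le> exp (2 * L * \<bar>t - t0\<bar>) \<and> exp (2 * L * \<bar>t - t0\<bar>) \<le> exp (2 * L * (b - a))"
    if "t \<in> {a..b}" for t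
    using that t0 \<open>0 \<le> L\<close> by (auto intro!: mult_left_mono)
  obtain Y where Y: "continuous_on {a..b} Y" and fixed: "\<And>t. t \<in> {a..b} \<Longrightarrow> picard_op G a t0 \<xi> Y t = Y t"
    by (rule weighted_contraction_fixpoint[OF compact_Icc _ picard_op_contraction[OF t0 contG lipG \<open>0 \<le> L\<close>] w])
      (auto intro: continuous_on_picard_op contG)
  show ?thesis
  proof
    show "Y t0 = \<xi>" using fixed[OF t0] by (simp add: picard_op_def)
    fix t assume t: "t \<in> {a..b}"
    have "(picard_op G a t0 \<xi> Y has_real_derivative G t (Y t)) (at t within {a..b})"
      unfolding picard_op_def
      by (auto intro!: derivative_eq_intros integral_has_real_derivative contG Y t)
    then show "(Y has_real_derivative G t (Y t)) (at t within {a..b})"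
      by (rule has_field_derivative_transform_within[where d = 1]) (use t fixed in auto)
  qed
qed

section \<open>Oriented integrals\<close>

lemma oint_same [simp]: "oint a a f = 0"
  by (simp add: oint_def)

lemma oint_eq_integral_diff:
  fixes f :: "real \<Rightarrow> real"
  assumes f: "continuous_on UNIV f" and "c \<le> a" "c \<le> b"
  shows "oint a b f = integral {c..b} f - integral {c..a} f"
proof -
  have int: "f integrable_on {x..y}" for x y
    by (rule integrable_continuous_real[OF continuous_on_subset[OF f]]) simp
  show ?thesis
  proof (cases "a \<le> b")
    case True
    then have "integral {c..a} f + integral {a..b} f = integral {c..b} f"
      using assms by (intro Henstock_Kurzweil_Integration.integral_combine int) auto
    then show ?thesis using True by (simp add: oint_def)
  next
    case False
    then have "integral {c..b} f + integral {b..a} f = integral {c..a} f"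
      using assms by (intro Henstock_Kurzweil_Integration.integral_combine int) auto
    then show ?thesis using False by (simp add: oint_def)
  qed
qed

lemma oint_add:
  fixes f :: "real \<Rightarrow> real"
  assumes "continuous_on UNIV f"
  shows "oint a b f + oint b d f = oint a d f"
  using oint_eq_integral_diff[OF assms, of "min a (min b d)"] by simp

lemma abs_oint_le:
  fixes f :: "real \<Rightarrow> real"
  assumes f: "continuous_on UNIV f"
    and bound: "\<And>y. min a b \<le> y \<Longrightarrow> y \<le> max a b \<Longrightarrow> \<bar>f y\<bar> \<le> B"
  shows "\<bar>oint a b f\<bar> \<le> B * \<bar>b - a\<bar>"
proof (cases "a \<le> b")
  case True
  have "norm (integral {a..b} f) \<le> B * (b - a)"
    by (rule integral_bound) (use True bound in \<open>auto intro: continuous_on_subset[OF f]\<close>)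
  then show ?thesis using True by (simp add: oint_def)
next
  case False
  have "norm (integral {b..a} f) \<le> B * (a - b)"
    by (rule integral_bound) (use False bound in \<open>auto intro: continuous_on_subset[OF f]\<close>)
  then show ?thesis using False by (simp add: oint_def)
qed

lemma has_real_derivative_oint:
  fixes f :: "real \<Rightarrow> real"
  assumes f: "continuous_on UNIV f"
  shows "((\<lambda>x. oint a x f) has_real_derivative f x) (at x)"
proof -
  define c where "c = min a x - 1"
  have c: "c \<le> a" "c < x" by (auto simp: c_def)
  have "((\<lambda>y. integral {c..y} f) has_real_derivative f x) (at x within {c..x + 1})"
    by (rule integral_has_real_derivative[OF continuous_on_subset[OF f]]) (use c in auto)
  moreover have "at x within {c..x + 1} = at x" by (rule at_within_interior) (use c in simp)
  ultimately have "((\<lambda>y. integral {c..y} f - integral {c..a} f) has_real_derivative f x) (at x)"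
    using DERIV_diff[OF _ DERIV_const] by fastforce
  then show ?thesis
    by (rule has_field_derivative_transform_within_open[where S = "{c<..}"])
      (use c oint_eq_integral_diff[OF f, of c] in auto)
qed

lemma oint_eq_scaled_integral:
  fixes f :: "real \<Rightarrow> real"
  assumes f: "continuous_on UNIV f"
  shows "oint 0 x f = x * integral {0..1} (\<lambda>r. f (r * x))"
proof -
  have "((\<lambda>r. x * f (r * x)) has_integral oint 0 (1 * x) f - oint 0 (0 * x) f) {0..1}"
  proof (rule fundamental_theorem_of_calculus)
    fix r :: real
    have "((\<lambda>r. oint 0 (r * x) f) has_real_derivative f (r * x) * x) (at r)"
      by (rule DERIV_chain2[OF has_real_derivative_oint[OF f]]) (auto intro!: derivative_eq_intros)
    then show "((\<lambda>r. oint 0 (r * x) f) has_vector_derivative x * f (r * x)) (at r within {0..1})"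
      by (simp add: has_real_derivative_iff_has_vector_derivative[symmetric] mult.commute
          has_field_derivative_at_within)
  qed simp
  then have "integral {0..1} (\<lambda>r. x * f (r * x)) = oint 0 x f" by (intro integral_unique) simp
  then show ?thesis by simp
qed

lemma continuous_on_slice:
  assumes "continuous_on (U \<times> UNIV) (\<lambda>(s, y). F s y)" and "s \<in> U"
  shows "continuous_on UNIV (F s)"
proof -
  have "continuous_on UNIV ((\<lambda>(s, y). F s y) \<circ> (\<lambda>y. (s, y)))"
    by (rule continuous_on_compose) (use assms in \<open>auto intro!: continuous_intros intro: continuous_on_subset\<close>)
  then show ?thesis by (simp add: o_def)
qed

lemma continuous_on_oint_param:
  fixes F :: "real \<Rightarrow> real \<Rightarrow> real"
  assumes F: "continuous_on (U \<times> UNIV) (\<lambda>(s, y). F s y)" and c: "continuous_on U c"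
  shows "continuous_on U (\<lambda>s. oint 0 (c s) (F s))"
proof -
  have "continuous_on (U \<times> cbox 0 1) (\<lambda>p. (\<lambda>(s, y). F s y) (fst p, snd p * c (fst p)))"
    by (rule continuous_on_compose2[OF F])
      (auto intro!: continuous_intros continuous_on_compose2[OF c])
  then have "continuous_on U (\<lambda>s. c s * integral (cbox 0 1) (\<lambda>r. F s (r * c s)))"
    by (intro continuous_intros c integral_continuous_on_param) (simp add: case_prod_beta)
  moreover have "c s * integral (cbox 0 1) (\<lambda>r. F s (r * c s)) = oint 0 (c s) (F s)" if "s \<in> U" for s
    using oint_eq_scaled_integral[OF continuous_on_slice[OF F that]] by simp
  ultimately show ?thesis by (simp cong: continuous_on_cong)
qed

section \<open>Characteristics\<close>

definition clamp :: "real \<Rightarrow> real \<Rightarrow> real" where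
  "clamp R x = max (- R) (min R x)"

lemma clamp_eq_self: "\<bar>x\<bar> \<le> R \<Longrightarrow> clamp R x = x"
  by (auto simp: clamp_def)

lemma abs_clamp_le: "0 \<le> R \<Longrightarrow> \<bar>clamp R x\<bar> \<le> R"
  by (auto simp: clamp_def)

lemma abs_clamp_diff_le: "\<bar>clamp R x - clamp R z\<bar> \<le> \<bar>x - z\<bar>"
  by (auto simp: clamp_def)

lemma continuous_on_clamp [continuous_intros]:
  "continuous_on S f \<Longrightarrow> continuous_on S (\<lambda>t. clamp R (f t))"
  unfolding clamp_def by (intro continuous_intros)

locale char_flow =
  fixes \<eta> :: "real \<Rightarrow> real \<Rightarrow> real" and s0 s1 x0 \<delta> :: real
  assumes s0_le_s1: "s0 \<le> s1"
    and eta_cont: "continuous_on ({s0..s1} \<times> UNIV) (\<lambda>(s, y). \<eta> s y)"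
    and x0_small: "\<bar>x0\<bar> \<le> \<delta>" and delta_pos: "0 < \<delta>" and delta_small: "\<delta> \<le> 1/100"
    and eta_small_AE: "\<forall>s\<in>{s0..s1}. AE y in lborel.
          y \<in> Omega_star \<eta> s0 s1 {- pi - x0 .. pi - x0} s \<longrightarrow> \<bar>\<eta> s y\<bar> \<le> \<delta>"
begin

abbreviation Omega0 :: "real set" where
  "Omega0 \<equiv> {- pi - x0 .. pi - x0}"

definition flow_line :: "(real \<Rightarrow> real) \<Rightarrow> bool" where
  "flow_line Y \<longleftrightarrow> charac \<eta> s0 s1 Y \<and> Y s0 \<in> Omega0"

lemma Omega0_bounds: "- pi + 1/100 \<le> y \<Longrightarrow> y \<le> pi - 1/100 \<Longrightarrow> y \<in> Omega0"
  and Omega0_abs_le: "y \<in> Omega0 \<Longrightarrow> \<bar>y\<bar> \<le> pi + 1/100"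
  using x0_small delta_small by (auto simp: abs_le_iff)

lemma zero_in_Omega0: "0 \<in> Omega0"
  using x0_small delta_small pi_gt3 by (auto simp: abs_le_iff)

lemma eta_slice_cont: "t \<in> {s0..s1} \<Longrightarrow> continuous_on UNIV (\<eta> t)"
  by (rule continuous_on_slice[OF eta_cont])

lemma eta_bounded: obtains K where "0 \<le> K" "\<And>t y. t \<in> {s0..s1} \<Longrightarrow> \<bar>y\<bar> \<le> R \<Longrightarrow> \<bar>\<eta> t y\<bar> \<le> K"
proof -
  have "bounded ((\<lambda>(s, y). \<eta> s y) ` ({s0..s1} \<times> {-R..R}))"
    by (intro compact_imp_bounded compact_continuous_image continuous_on_subset[OF eta_cont] compact_Times)
      auto
  then obtain K where "0 < K" and K: "\<forall>x\<in>(\<lambda>(s, y). \<eta> s y) ` ({s0..s1} \<times> {-R..R}). \<bar>x\<bar> \<le> K"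
    by (auto simp: bounded_pos)
  show ?thesis
  proof (rule that)
    show "0 \<le> K" using \<open>0 < K\<close> by simp
    fix t y assume "t \<in> {s0..s1}" "\<bar>y\<bar> \<le> R"
    then have "(t, y) \<in> {s0..s1} \<times> {-R..R}" by (simp add: abs_le_iff)
    then show "\<bar>\<eta> t y\<bar> \<le> K" using K by fastforce
  qed
qed

lemma charac_cont: "charac \<eta> s0 s1 Y \<Longrightarrow> continuous_on {s0..s1} Y"
  unfolding charac_def by (rule DERIV_continuous_on) blast

lemma charac_deriv: "charac \<eta> s0 s1 Y \<Longrightarrow> t \<in> {s0..s1} \<Longrightarrow>
    (Y has_real_derivative (sin (Y t) + oint 0 (Y t) (\<eta> t))) (at t within {s0..s1})"
  by (simp add: charac_def)

text \<open>Outside \<open>[-R, R]\<close> the clamped field is frozen, which makes it globally Lipschitz; it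
  coincides with the characteristic field along curves bounded by \<open>R\<close>.\<close>

definition clamped_field :: "real \<Rightarrow> real \<Rightarrow> real \<Rightarrow> real" where
  "clamped_field R \<tau> x = sin (clamp R x) + oint 0 (clamp R x) (\<eta> \<tau>)"

lemma clamped_field_lipschitz:
  assumes "0 \<le> R"
  obtains L where "0 \<le> L"
    "\<And>\<tau> x z. \<tau> \<in> {s0..s1} \<Longrightarrow> \<bar>clamped_field R \<tau> x - clamped_field R \<tau> z\<bar> \<le> L * \<bar>x - z\<bar>"
proof -
  obtain K where K: "0 \<le> K" "\<And>t y. t \<in> {s0..s1} \<Longrightarrow> \<bar>y\<bar> \<le> R \<Longrightarrow> \<bar>\<eta> t y\<bar> \<le> K"
    using eta_bounded[of R] by blast
  have "\<bar>clamped_field R \<tau> x - clamped_field R \<tau> z\<bar> \<le> (1 + K) * \<bar>x - z\<bar>" if \<tau>: "\<tau> \<in> {s0..s1}" for \<tau> x z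
  proof -
    let ?x = "clamp R x" and ?z = "clamp R z"
    have "clamped_field R \<tau> x - clamped_field R \<tau> z = (sin ?x - sin ?z) + oint ?z ?x (\<eta> \<tau>)"
      using oint_add[OF eta_slice_cont[OF \<tau>], of 0 ?z ?x] by (simp add: clamped_field_def)
    then have "\<bar>clamped_field R \<tau> x - clamped_field R \<tau> z\<bar> \<le> \<bar>sin ?x - sin ?z\<bar> + \<bar>oint ?z ?x (\<eta> \<tau>)\<bar>"
      by (simp only: abs_triangle_ineq)
    moreover have "\<bar>oint ?z ?x (\<eta> \<tau>)\<bar> \<le> K * \<bar>?x - ?z\<bar>"
      by (rule abs_oint_le[OF eta_slice_cont[OF \<tau>]])
        (use K(2)[OF \<tau>] abs_clamp_le[OF \<open>0 \<le> R\<close>, of x] abs_clamp_le[OF \<open>0 \<le> R\<close>, of z] in auto)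
    moreover have "K * \<bar>?x - ?z\<bar> \<le> K * \<bar>x - z\<bar>"
      by (rule mult_left_mono[OF abs_clamp_diff_le \<open>0 \<le> K\<close>])
    moreover have "(1 + K) * \<bar>x - z\<bar> = \<bar>x - z\<bar> + K * \<bar>x - z\<bar>" by (simp add: algebra_simps)
    ultimately show ?thesis
      using abs_sin_diff_le[of ?x ?z] abs_clamp_diff_le[of R x z] by linarith
  qed
  then show ?thesis using that[of "1 + K"] \<open>0 \<le> K\<close> by simp
qed

lemma continuous_on_clamped_field:
  "continuous_on {s0..s1} \<phi> \<Longrightarrow> continuous_on {s0..s1} (\<lambda>\<tau>. clamped_field R \<tau> (\<phi> \<tau>))"
  unfolding clamped_field_def by (intro continuous_intros continuous_on_oint_param[OF eta_cont])

lemma charac_iff_clamped: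
  assumes "\<And>\<tau>. \<tau> \<in> {s0..s1} \<Longrightarrow> \<bar>Y \<tau>\<bar> \<le> R"
  shows "charac \<eta> s0 s1 Y \<longleftrightarrow>
    (\<forall>\<tau>\<in>{s0..s1}. (Y has_real_derivative clamped_field R \<tau> (Y \<tau>)) (at \<tau> within {s0..s1}))"
  using assms by (simp add: charac_def clamped_field_def clamp_eq_self)

text \<open>The characteristic through the point, solved backwards, stays between the given
  characteristic and the stationary solution 0 by uniqueness.\<close>

lemma segment_in_Omega_star:
  assumes Y: "flow_line Y" and t: "t \<in> {s0..s1}" and y: "min 0 (Y t) \<le> y" "y \<le> max 0 (Y t)"
  shows "y \<in> Omega_star \<eta> s0 s1 Omega0 t"
proof -
  have Yc: "charac \<eta> s0 s1 Y" and Y0: "Y s0 \<in> Omega0" using Y by (auto simp: flow_line_def)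
  have "bounded (Y ` {s0..s1})"
    by (intro compact_imp_bounded compact_continuous_image charac_cont[OF Yc]) simp
  then obtain R where "0 < R" and R: "\<And>\<tau>. \<tau> \<in> {s0..s1} \<Longrightarrow> \<bar>Y \<tau>\<bar> \<le> R"
    by (auto simp: bounded_pos)
  obtain L where "0 \<le> L" and lip: "\<And>\<tau> x z. \<tau> \<in> {s0..s1} \<Longrightarrow>
      \<bar>clamped_field R \<tau> x - clamped_field R \<tau> z\<bar> \<le> L * \<bar>x - z\<bar>"
    using clamped_field_lipschitz[of R] \<open>0 < R\<close> by auto
  obtain Z where "Z t = y" and Z: "\<And>\<tau>. \<tau> \<in> {s0..s1} \<Longrightarrow>
      (Z has_real_derivative clamped_field R \<tau> (Z \<tau>)) (at \<tau> within {s0..s1})"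
    using picard_existence[where \<xi> = y, OF t \<open>0 \<le> L\<close> continuous_on_clamped_field lip] by blast
  have Y_sol: "\<And>\<tau>. \<tau> \<in> {s0..s1} \<Longrightarrow>
      (Y has_real_derivative clamped_field R \<tau> (Y \<tau>)) (at \<tau> within {s0..s1})"
    using Yc R charac_iff_clamped[where Y = Y and R = R] by blast
  have zero_sol: "\<And>\<tau>. \<tau> \<in> {s0..s1} \<Longrightarrow>
      ((\<lambda>_. 0) has_real_derivative clamped_field R \<tau> 0) (at \<tau> within {s0..s1})"
    using \<open>0 < R\<close> by (simp add: clamped_field_def clamp_eq_self)
  have between: "min 0 (Y \<tau>) \<le> Z \<tau> \<and> Z \<tau> \<le> max 0 (Y \<tau>)" if \<tau>: "\<tau> \<in> {s0..s1}" for \<tau>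
  proof (cases "0 \<le> Y t")
    case True
    then show ?thesis using ode_solution_between[OF lip zero_sol Y_sol Z t _ _ \<tau>] y \<open>Z t = y\<close> by auto
  next
    case False
    then show ?thesis using ode_solution_between[OF lip Y_sol zero_sol Z t _ _ \<tau>] y \<open>Z t = y\<close> by auto
  qed
  then have "\<bar>Z \<tau>\<bar> \<le> R" if "\<tau> \<in> {s0..s1}" for \<tau>
    using R[OF that] between[OF that] by (auto simp: abs_le_iff)
  then have "charac \<eta> s0 s1 Z" using Z charac_iff_clamped[where Y = Z and R = R] by blast
  moreover have "Z s0 \<in> Omega0"
    using between[of s0] s0_le_s1 Y0 zero_in_Omega0 by (auto simp: min_def max_def split: if_splits)
  ultimately show ?thesis using \<open>Z t = y\<close> unfolding Omega_star_def by blast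
qed

lemma eta_bound_on_segment:
  assumes Y: "flow_line Y" and t: "t \<in> {s0..s1}" and "Y t \<noteq> 0"
    and y: "min 0 (Y t) \<le> y" "y \<le> max 0 (Y t)"
  shows "\<bar>\<eta> t y\<bar> \<le> \<delta>"
proof (rule AE_abs_le_imp_abs_le_continuous_on[where f = "\<eta> t"])
  show "min 0 (Y t) < max 0 (Y t)" using \<open>Y t \<noteq> 0\<close> by linarith
  show "continuous_on {min 0 (Y t)..max 0 (Y t)} (\<eta> t)"
    by (rule continuous_on_subset[OF eta_slice_cont[OF t]]) simp
  show "AE y in lborel. y \<in> {min 0 (Y t)..max 0 (Y t)} \<longrightarrow> \<bar>\<eta> t y\<bar> \<le> \<delta>"
    using eta_small_AE t by (auto elim!: eventually_mono dest: segment_in_Omega_star[OF Y t])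
qed (use y in auto)

lemma abs_oint_eta_le:
  assumes Y: "flow_line Y" and t: "t \<in> {s0..s1}"
  shows "\<bar>oint 0 (Y t) (\<eta> t)\<bar> \<le> \<delta> * \<bar>Y t\<bar>"
  using abs_oint_le[OF eta_slice_cont[OF t], of 0 "Y t" \<delta>] eta_bound_on_segment[OF Y t]
  by (cases "Y t = 0") auto

lemma abs_oint_eta_between_le:
  assumes Y1: "flow_line Y1" and Y2: "flow_line Y2" and t: "t \<in> {s0..s1}"
  shows "\<bar>oint (Y2 t) (Y1 t) (\<eta> t)\<bar> \<le> \<delta> * \<bar>Y1 t - Y2 t\<bar>"
proof (cases "Y1 t = Y2 t")
  case False
  show ?thesis
  proof (rule abs_oint_le[OF eta_slice_cont[OF t]])
    fix y assume "min (Y2 t) (Y1 t) \<le> y" "y \<le> max (Y2 t) (Y1 t)"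
    then have "(Y1 t \<noteq> 0 \<and> min 0 (Y1 t) \<le> y \<and> y \<le> max 0 (Y1 t)) \<or>
        (Y2 t \<noteq> 0 \<and> min 0 (Y2 t) \<le> y \<and> y \<le> max 0 (Y2 t))"
      using False by (auto simp: min_def max_def split: if_splits)
    then show "\<bar>\<eta> t y\<bar> \<le> \<delta>"
      using eta_bound_on_segment[OF Y1 t] eta_bound_on_segment[OF Y2 t] by blast
  qed
qed simp

lemma flow_line_dist_le:
  assumes Y1: "flow_line Y1" and Y2: "flow_line Y2" and t: "t \<in> {s0..s1}"
  shows "\<bar>Y1 t - Y2 t\<bar> \<le> exp ((1 + \<delta>) * (t - s0)) * \<bar>Y1 s0 - Y2 s0\<bar>"
proof -
  have c1: "charac \<eta> s0 s1 Y1" and c2: "charac \<eta> s0 s1 Y2" using Y1 Y2 by (auto simp: flow_line_def)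
  let ?F = "\<lambda>Y \<tau>. sin (Y \<tau>) + oint 0 (Y \<tau>) (\<eta> \<tau>)"
  have "\<bar>?F Y1 \<tau> - ?F Y2 \<tau>\<bar> \<le> (1 + \<delta>) * \<bar>Y1 \<tau> - Y2 \<tau>\<bar>" if \<tau>: "\<tau> \<in> {s0..s1}" for \<tau>
  proof -
    have "?F Y1 \<tau> - ?F Y2 \<tau> = (sin (Y1 \<tau>) - sin (Y2 \<tau>)) + oint (Y2 \<tau>) (Y1 \<tau>) (\<eta> \<tau>)"
      using oint_add[OF eta_slice_cont[OF \<tau>], of 0 "Y2 \<tau>" "Y1 \<tau>"] by simp
    then show ?thesis
      using abs_sin_diff_le[of "Y1 \<tau>" "Y2 \<tau>"] abs_oint_eta_between_le[OF Y1 Y2 \<tau>]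
      by (simp add: algebra_simps abs_le_iff)
  qed
  then have "\<bar>Y1 t - Y2 t\<bar> \<le> exp ((1 + \<delta>) * \<bar>t - s0\<bar>) * \<bar>Y1 s0 - Y2 s0\<bar>"
    using s0_le_s1 t by (intro gronwall_abs[OF DERIV_diff[OF charac_deriv[OF c1] charac_deriv[OF c2]]]) auto
  then show ?thesis using t by simp
qed

text \<open>At \<open>\<bar>Y\<bar> = pi + 1/2\<close> the drift \<open>sin Y\<close> points inwards and dominates the perturbation.\<close>

lemma flow_line_signed_bound:
  assumes Y: "flow_line Y" and \<sigma>: "\<sigma> = 1 \<or> \<sigma> = -1" and t: "t \<in> {s0..s1}"
  shows "\<sigma> * Y t \<le> pi + 1/2"
proof (rule le_on_interval_if_no_upcrossing[where f = "\<lambda>t. \<sigma> * Y t", OF _ _ _ t])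
  have Yc: "charac \<eta> s0 s1 Y" using Y by (simp add: flow_line_def)
  show "continuous_on {s0..s1} (\<lambda>t. \<sigma> * Y t)" by (intro continuous_intros charac_cont[OF Yc])
  show "\<sigma> * Y s0 \<le> pi + 1/2" using Omega0_abs_le[of "Y s0"] Y \<sigma> by (auto simp: flow_line_def)
  fix \<tau> assume "\<tau> \<in> {s0..<s1}" and at_barrier: "\<sigma> * Y \<tau> = pi + 1/2"
  then have \<tau>: "\<tau> \<in> {s0..s1}" by simp
  have sin_barrier: "sin (pi + 1/2) = - sin (1/2)"
    using sin_periodic_pi[of "1/2"] by (simp add: add.commute)
  consider "Y \<tau> = pi + 1/2" "\<sigma> = 1" | "Y \<tau> = - (pi + 1/2)" "\<sigma> = -1"
    using at_barrier \<sigma> by fastforce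
  then have "\<sigma> * sin (Y \<tau>) = - sin (1/2) \<and> \<bar>Y \<tau>\<bar> = pi + 1/2"
    by cases (simp_all only: sin_barrier sin_minus minus_minus abs_minus_cancel mult_1_left
        mult_minus1 abs_of_pos[OF add_pos_pos[OF pi_gt_zero, of "1/2"]] zero_less_divide_iff, simp_all)
  moreover have "\<bar>oint 0 (Y \<tau>) (\<eta> \<tau>)\<bar> \<le> \<delta> * \<bar>Y \<tau>\<bar>" by (rule abs_oint_eta_le[OF Y \<tau>])
  moreover have "\<delta> * (pi + 1/2) < sin (1/2)"
  proof -
    have "\<delta> * (pi + 1/2) \<le> 1/100 * (pi + 1/2)" using delta_small pi_gt3 by (intro mult_right_mono) auto
    also have "\<dots> < 1/6" using pi_less_4 by simp
    also have "\<dots> \<le> sin (1/2)" using sin_ge_third[of "1/2"] pi_gt3 by simp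
    finally show ?thesis .
  qed
  ultimately have "\<sigma> * (sin (Y \<tau>) + oint 0 (Y \<tau>) (\<eta> \<tau>)) < 0"
    using \<sigma> by (auto simp: algebra_simps abs_le_iff)
  then have "eventually (\<lambda>t. \<sigma> * Y t < \<sigma> * Y \<tau>) (at \<tau> within {\<tau><..s1})"
    by (intro has_real_derivative_neg_eventually_right[OF DERIV_cmult[OF charac_deriv[OF Yc \<tau>]] _ \<tau>])
  then show "eventually (\<lambda>t. \<sigma> * Y t \<le> pi + 1/2) (at \<tau> within {\<tau><..s1})"
    by (rule eventually_mono) (use at_barrier in auto)
qed

lemma flow_line_bounded:
  assumes "flow_line Y" "t \<in> {s0..s1}"
  shows "\<bar>Y t\<bar> \<le> pi + 1/2"
  using flow_line_signed_bound[OF assms(1) _ assms(2), of 1] flow_line_signed_bound[OF assms(1) _ assms(2), of "-1"]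
  by auto

end

section \<open>The weight\<close>

lemma red2pi_eqI:
  assumes "- pi \<le> y" "y < pi" "x = y + 2 * pi * of_int k"
  shows "red2pi x = y"
proof -
  have "\<lfloor>(x + pi) / (2 * pi)\<rfloor> = k"
    using assms by (simp add: floor_eq_iff field_simps)
  then show ?thesis using assms(3) by (simp add: red2pi_def)
qed

lemma red2pi_bounds: "- pi \<le> red2pi x" "red2pi x < pi"
proof -
  let ?q = "(x + pi) / (2 * pi)"
  have "of_int \<lfloor>?q\<rfloor> * (2 * pi) \<le> x + pi"
    by (subst pos_le_divide_eq[symmetric]) (use pi_gt3 in auto)
  moreover have "x + pi < (of_int \<lfloor>?q\<rfloor> + 1) * (2 * pi)"
    by (subst pos_divide_less_eq[symmetric]) (use pi_gt3 in auto)
  ultimately show "- pi \<le> red2pi x" "red2pi x < pi" by (simp_all add: red2pi_def algebra_simps)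
qed

lemma red2pi_uminus_cases: "red2pi (- x) = - red2pi x \<or> red2pi (- x) = red2pi x \<and> red2pi x = - pi"
proof -
  let ?k = "\<lfloor>(x + pi) / (2 * pi)\<rfloor>"
  have x: "x = red2pi x + 2 * pi * of_int ?k" by (simp add: red2pi_def)
  show ?thesis
  proof (cases "red2pi x = - pi")
    case True
    then have "red2pi (- x) = - pi"
      using x by (intro red2pi_eqI[where k = "1 - ?k"]) (simp_all add: algebra_simps)
    with True show ?thesis by simp
  next
    case False
    then have "red2pi (- x) = - red2pi x"
      using x red2pi_bounds[of x] by (intro red2pi_eqI[where k = "- ?k"]) (auto simp: algebra_simps)
    then show ?thesis by simp
  qed
qed

lemma Wt_uminus: "Wt C \<theta> (- x) = Wt C \<theta> x"
  using red2pi_uminus_cases[of x] by (elim disjE) (simp_all add: Wt_def Wm1_def Wtilde_def Let_def)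

lemma Wt_nonneg: "0 \<le> Wt C \<theta> x"
  by (simp add: Wt_def Wm1_def Wtilde_def Let_def)

text \<open>On \<open>[0, pi + 1]\<close> the weight consists of three explicit pieces; \<open>wrapped_weight\<close> is the
  periodic continuation of \<open>exp (C \<bar>x\<bar> / \<theta>)\<close> past \<open>pi\<close>, which characteristics may cross.\<close>

definition inner_weight :: "real \<Rightarrow> real \<Rightarrow> real \<Rightarrow> real" where
  "inner_weight C \<theta> z = sin z * (sin (z / 2))\<^sup>2 * exp (C * z / \<theta>)"

definition outer_weight :: "real \<Rightarrow> real \<Rightarrow> real \<Rightarrow> real" where
  "outer_weight C \<theta> z = 3 * sqrt 3 / 8 * exp (C * z / \<theta>)"

definition wrapped_weight :: "real \<Rightarrow> real \<Rightarrow> real \<Rightarrow> real" where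
  "wrapped_weight C \<theta> z = 3 * sqrt 3 / 8 * exp (C * (2 * pi - z) / \<theta>)"

lemma Wt_eq_inner_weight:
  assumes "0 \<le> z" "z \<le> 2 * pi / 3"
  shows "Wt C \<theta> z = inner_weight C \<theta> z"
proof -
  have "red2pi z = z" using assms pi_gt3 by (intro red2pi_eqI[where k = 0]) auto
  moreover have "0 \<le> sin z" using assms pi_gt3 by (intro sin_ge_zero) auto
  ultimately show ?thesis
    using assms by (simp add: Wt_def Wm1_def Wtilde_def inner_weight_def Let_def)
qed

lemma Wt_eq_outer_weight:
  assumes z: "2 * pi / 3 \<le> z" "z \<le> pi"
  shows "Wt C \<theta> z = outer_weight C \<theta> z"
proof -
  have "\<bar>red2pi z\<bar> = z"
  proof (cases "z = pi")
    case True
    then show ?thesis using red2pi_eqI[of "- pi" z 1] by simp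
  next
    case False
    then show ?thesis using z pi_gt3 red2pi_eqI[of z z 0] by auto
  qed
  moreover have "Wm1 z = 3 * sqrt 3 / 8"
  proof (cases "z = 2 * pi / 3")
    case True
    have "2 * pi / 3 = pi - pi / 3" by simp
    then have sin_2pi3: "sin (2 * pi / 3) = sqrt 3 / 2" by (simp only: sin_pi_minus sin_60)
    have r: "red2pi (2 * pi / 3) = 2 * pi / 3" using pi_gt3 by (intro red2pi_eqI[where k = 0]) auto
    have "2 * pi / 3 / 2 = pi / 3" by simp
    then show ?thesis unfolding True Wm1_def Let_def r by (simp add: sin_2pi3 sin_60 power2_eq_square)
  next
    case False
    then have "\<not> \<bar>red2pi z\<bar> \<le> 2 * pi / 3" using \<open>\<bar>red2pi z\<bar> = z\<close> z by auto
    then show ?thesis by (simp add: Wm1_def Let_def)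
  qed
  ultimately show ?thesis by (simp add: Wt_def Wtilde_def outer_weight_def)
qed

lemma Wt_eq_wrapped_weight:
  assumes "pi \<le> z" "z \<le> pi + 1"
  shows "Wt C \<theta> z = wrapped_weight C \<theta> z"
proof -
  have "red2pi z = z - 2 * pi" using assms pi_gt3 by (intro red2pi_eqI[where k = 1]) auto
  moreover have "1 < pi / 3" using pi_gt3 by simp
  ultimately show ?thesis
    using assms by (simp add: Wt_def Wm1_def Wtilde_def wrapped_weight_def Let_def abs_if)
qed

lemma continuous_on_Wt:
  assumes "\<theta> \<noteq> 0"
  shows "continuous_on {- pi - 1 .. pi + 1} (Wt C \<theta>)"
proof -
  have "continuous_on {0 .. 2 * pi / 3} (inner_weight C \<theta>)"
    using assms by (auto simp: inner_weight_def intro!: continuous_intros)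
  then have "continuous_on {0 .. 2 * pi / 3} (Wt C \<theta>)"
    by (rule continuous_on_eq) (simp add: Wt_eq_inner_weight)
  moreover have "continuous_on {2 * pi / 3 .. pi} (outer_weight C \<theta>)"
    using assms by (auto simp: outer_weight_def intro!: continuous_intros)
  then have "continuous_on {2 * pi / 3 .. pi} (Wt C \<theta>)"
    by (rule continuous_on_eq) (simp add: Wt_eq_outer_weight)
  moreover have "continuous_on {pi .. pi + 1} (wrapped_weight C \<theta>)"
    using assms by (auto simp: wrapped_weight_def intro!: continuous_intros)
  then have "continuous_on {pi .. pi + 1} (Wt C \<theta>)"
    by (rule continuous_on_eq) (simp add: Wt_eq_wrapped_weight)
  ultimately have "continuous_on ({0 .. 2 * pi / 3} \<union> {2 * pi / 3 .. pi} \<union> {pi .. pi + 1}) (Wt C \<theta>)"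
    by (intro continuous_on_closed_Un) auto
  moreover have "{0 .. 2 * pi / 3} \<union> {2 * pi / 3 .. pi} \<union> {pi .. pi + 1} = {0 .. pi + 1}"
    using pi_gt3 by auto
  ultimately have pos: "continuous_on {0 .. pi + 1} (Wt C \<theta>)" by simp
  then have "continuous_on {- pi - 1 .. 0} (\<lambda>x. Wt C \<theta> (- x))"
    by (rule continuous_on_compose2) (use pi_gt3 in \<open>auto intro!: continuous_intros\<close>)
  then have "continuous_on {- pi - 1 .. 0} (Wt C \<theta>)" by (simp add: Wt_uminus)
  with pos have "continuous_on ({- pi - 1 .. 0} \<union> {0 .. pi + 1}) (Wt C \<theta>)"
    by (intro continuous_on_closed_Un) auto
  moreover have "{- pi - 1 .. 0} \<union> {0 .. pi + 1} = {- pi - 1 .. pi + 1}" using pi_gt3 by auto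
  ultimately show ?thesis by simp
qed

lemma has_real_derivative_inner_weight:
  assumes "\<theta> \<noteq> 0"
  shows "(inner_weight C \<theta> has_real_derivative
    (sin (z / 2))\<^sup>2 * (1 + 2 * cos z + C / \<theta> * sin z) * exp (C * z / \<theta>)) (at z)"
proof -
  have sin_z: "sin z = 2 * sin (z / 2) * cos (z / 2)" using sin_double[of "z / 2"] by simp
  have cos_z: "cos z = 2 * (cos (z / 2))\<^sup>2 - 1" using cos_double_cos[of "z / 2"] by simp
  show ?thesis
    unfolding inner_weight_def using assms
    by (auto intro!: derivative_eq_intros simp: sin_z cos_z algebra_simps power2_eq_square)
qed

lemma has_real_derivative_outer_weight:
  "\<theta> \<noteq> 0 \<Longrightarrow> (outer_weight C \<theta> has_real_derivative C / \<theta> * outer_weight C \<theta> z) (at z)"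
  unfolding outer_weight_def by (auto intro!: derivative_eq_intros)

lemma has_real_derivative_wrapped_weight:
  "\<theta> \<noteq> 0 \<Longrightarrow> (wrapped_weight C \<theta> has_real_derivative - (C / \<theta>) * wrapped_weight C \<theta> z) (at z)"
  unfolding wrapped_weight_def by (auto intro!: derivative_eq_intros)

lemma cos_le_minus_half:
  assumes "2 * pi / 3 \<le> z" "z \<le> 4 * pi / 3"
  shows "cos z \<le> - 1/2"
proof (cases "z \<le> pi")
  case True
  then have "cos z \<le> cos (2 * pi / 3)" using assms by (intro cos_monotone_0_pi_le) auto
  then show ?thesis using cos_pi_minus[of "pi / 3"] by (simp add: cos_60)
next
  case False
  then have "cos (2 * pi - z) \<le> cos (2 * pi / 3)" using assms by (intro cos_monotone_0_pi_le) auto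
  then show ?thesis using cos_pi_minus[of "pi / 3"] by (simp add: cos_60 cos_diff)
qed

locale weight_params =
  fixes C \<theta> \<theta>' \<delta> :: real
  assumes C_ge_1: "1 \<le> C" and theta_pos: "0 < \<theta>" and theta_less: "\<theta> < \<theta>'"
    and theta'_less_1: "\<theta>' < 1" and delta_nonneg: "0 \<le> \<delta>"
    and delta_le: "\<delta> \<le> \<theta> * \<theta>' / (100 * C)"
begin

lemma rate_nonneg: "0 \<le> C / \<theta>"
  using C_ge_1 theta_pos by simp

lemma rate_delta_le: "C / \<theta> * \<delta> \<le> \<theta>' / 100"
proof -
  have "C / \<theta> * \<delta> \<le> C / \<theta> * (\<theta> * \<theta>' / (100 * C))" by (rule mult_left_mono[OF delta_le rate_nonneg])
  also have "\<dots> = \<theta>' / 100" using C_ge_1 theta_pos by (simp add: field_simps)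
  finally show ?thesis .
qed

lemma delta_le_theta': "\<delta> \<le> \<theta>' / 100"
proof -
  have "\<theta> * \<theta>' / (100 * C) \<le> C * \<theta>' / (100 * C)"
    using C_ge_1 theta_pos theta_less theta'_less_1 by (intro divide_right_mono mult_right_mono) auto
  then show ?thesis using delta_le C_ge_1 by simp
qed

text \<open>The weight is a strict supersolution of the transport equation along characteristics:
  the three inequalities below say that \<open>Wt(Y) exp (-(1 - \<theta>') s - \<integral> 2 cos Y)\<close> increases
  as long as the perturbation \<open>e\<close> of the drift \<open>sin Y\<close> is at most \<open>\<delta> \<bar>Y\<bar>\<close>.\<close>

lemma inner_supersolution:
  assumes z: "0 < z" "z \<le> 2 * pi / 3" and e: "\<bar>e\<bar> \<le> \<delta> * z"
  shows "0 < (sin (z / 2))\<^sup>2 * (1 + 2 * cos z + C / \<theta> * sin z) * exp (C * z / \<theta>) * (sin z + e)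
    - inner_weight C \<theta> z * (1 - \<theta>' + 2 * cos z)"
proof -
  define k S A where "k = C / \<theta>" and "S = sin z" and "A = 1 + 2 * cos z + k * S"
  have "0 \<le> k" unfolding k_def by (rule rate_nonneg)
  have "0 < S" unfolding S_def using z pi_gt3 by (intro sin_gt_zero) auto
  have "z \<le> 3 * S" unfolding S_def using sin_ge_third[of z] z by auto
  have "cos (2 * pi / 3) \<le> cos z" using z by (intro cos_monotone_0_pi_le) auto
  then have "- 1/2 \<le> cos z" using cos_pi_minus[of "pi / 3"] by (simp add: cos_60)
  moreover have "0 \<le> k * S" using \<open>0 \<le> k\<close> \<open>0 < S\<close> by simp
  ultimately have "0 \<le> A" "A \<le> 3 + k * S" by (auto simp: A_def)
  have "\<bar>e\<bar> \<le> 3 * \<delta> * S" using e mult_left_mono[OF \<open>z \<le> 3 * S\<close> delta_nonneg] by simp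
  then have "A * \<bar>e\<bar> \<le> (3 + k * S) * (3 * \<delta> * S)"
    using \<open>0 \<le> A\<close> \<open>A \<le> 3 + k * S\<close> delta_nonneg by (intro mult_mono) auto
  moreover have "- (A * e) \<le> A * \<bar>e\<bar>" using mult_left_mono[OF abs_ge_minus_self \<open>0 \<le> A\<close>] by simp
  moreover have "(3 + k * S) * (3 * \<delta> * S) = 9 * \<delta> * S + 3 * \<delta> * (k * S\<^sup>2)"
    by (simp add: algebra_simps power2_eq_square)
  moreover have "9 * \<delta> * S < \<theta>' * S"
    using delta_le_theta' theta_less theta_pos \<open>0 < S\<close> by (intro mult_strict_right_mono) auto
  moreover have "3 * \<delta> * (k * S\<^sup>2) \<le> 1 * (k * S\<^sup>2)"
    using delta_le_theta' theta'_less_1 \<open>0 \<le> k\<close> by (intro mult_right_mono) auto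
  ultimately have "0 < k * S\<^sup>2 + \<theta>' * S + A * e" by linarith
  moreover have "0 < sin (z / 2)" using z pi_gt3 by (intro sin_gt_zero) auto
  ultimately have "0 < (sin (z / 2))\<^sup>2 * exp (C * z / \<theta>) * (k * S\<^sup>2 + \<theta>' * S + A * e)" by simp
  also have "\<dots> = (sin (z / 2))\<^sup>2 * (1 + 2 * cos z + k * sin z) * exp (C * z / \<theta>) * (sin z + e)
    - inner_weight C \<theta> z * (1 - \<theta>' + 2 * cos z)"
    by (simp add: inner_weight_def S_def A_def algebra_simps power2_eq_square)
  finally show ?thesis by (simp add: k_def)
qed

lemma outer_supersolution:
  assumes z: "2 * pi / 3 \<le> z" "z \<le> pi" and e: "\<bar>e\<bar> \<le> \<delta> * z"
  shows "0 < C / \<theta> * outer_weight C \<theta> z * (sin z + e) - outer_weight C \<theta> z * (1 - \<theta>' + 2 * cos z)"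
proof -
  define k W where "k = C / \<theta>" and "W = outer_weight C \<theta> z"
  have "0 \<le> k" unfolding k_def by (rule rate_nonneg)
  have "0 \<le> sin z" using z by (intro sin_ge_zero) auto
  have "cos z \<le> - 1/2" using z by (intro cos_le_minus_half) auto
  have "\<bar>e\<bar> \<le> \<delta> * 4" using e mult_left_mono[of z 4 \<delta>] z pi_less_4 delta_nonneg by linarith
  then have "k * (- e) \<le> k * (\<delta> * 4)" by (intro mult_left_mono[OF _ \<open>0 \<le> k\<close>]) linarith
  then have "- (k * e) \<le> 4 * (k * \<delta>)" by (simp add: algebra_simps)
  moreover have "k * \<delta> \<le> \<theta>' / 100" unfolding k_def by (rule rate_delta_le)
  moreover have "0 \<le> k * sin z" using \<open>0 \<le> k\<close> \<open>0 \<le> sin z\<close> by simp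
  ultimately have "0 < k * sin z + k * e - 1 - 2 * cos z + \<theta>'"
    using \<open>cos z \<le> - 1/2\<close> theta_less theta_pos by linarith
  moreover have "0 < W" by (simp add: W_def outer_weight_def)
  ultimately have "0 < W * (k * sin z + k * e - 1 - 2 * cos z + \<theta>')" by simp
  then show ?thesis unfolding k_def[symmetric] W_def[symmetric] by (simp add: algebra_simps)
qed

lemma wrapped_supersolution:
  assumes z: "pi \<le> z" "z \<le> pi + 1" and e: "\<bar>e\<bar> \<le> \<delta> * z"
  shows "0 < - (C / \<theta>) * wrapped_weight C \<theta> z * (sin z + e) - wrapped_weight C \<theta> z * (1 - \<theta>' + 2 * cos z)"
proof -
  define k W where "k = C / \<theta>" and "W = wrapped_weight C \<theta> z"
  have "0 \<le> k" unfolding k_def by (rule rate_nonneg)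
  have "sin z \<le> 0" using z pi_gt3 by (intro sin_le_zero) auto
  have "cos z \<le> - 1/2" using z pi_gt3 by (intro cos_le_minus_half) auto
  have "\<bar>e\<bar> \<le> \<delta> * 5" using e mult_left_mono[of z 5 \<delta>] z pi_less_4 delta_nonneg by linarith
  then have "k * e \<le> k * (\<delta> * 5)" by (intro mult_left_mono[OF _ \<open>0 \<le> k\<close>]) linarith
  then have "k * e \<le> 5 * (k * \<delta>)" by (simp add: algebra_simps)
  moreover have "k * \<delta> \<le> \<theta>' / 100" unfolding k_def by (rule rate_delta_le)
  moreover have "k * sin z \<le> 0" using \<open>0 \<le> k\<close> \<open>sin z \<le> 0\<close> by (simp add: mult_nonneg_nonpos)
  ultimately have "0 < - (k * sin z) - k * e - 1 - 2 * cos z + \<theta>'"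
    using \<open>cos z \<le> - 1/2\<close> theta_less theta_pos by linarith
  moreover have "0 < W" by (simp add: W_def wrapped_weight_def)
  ultimately have "0 < W * (- (k * sin z) - k * e - 1 - 2 * cos z + \<theta>')" by simp
  then show ?thesis unfolding k_def[symmetric] W_def[symmetric] by (simp add: algebra_simps)
qed

end

section \<open>Decay along characteristics\<close>

context char_flow
begin

lemma eventually_scaled_charac_in_open:
  assumes Yc: "charac \<eta> s0 s1 Y" and \<tau>0: "\<tau>0 \<in> {s0..<s1}" and "open A" "\<sigma> * Y \<tau>0 \<in> A"
  shows "eventually (\<lambda>\<tau>. \<sigma> * Y \<tau> \<in> A) (at \<tau>0 within {\<tau>0<..s1})"
proof -
  have "((\<lambda>\<tau>. \<sigma> * Y \<tau>) \<longlongrightarrow> \<sigma> * Y \<tau>0) (at \<tau>0 within {s0..s1})"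
    using charac_cont[OF Yc] \<tau>0
    by (intro tendsto_intros) (simp add: continuous_on_eq_continuous_within continuous_within)
  then have "eventually (\<lambda>\<tau>. \<sigma> * Y \<tau> \<in> A) (at \<tau>0 within {s0..s1})"
    using assms(3,4) by (rule topological_tendstoD)
  then show ?thesis by (rule filter_leD[OF at_le, rotated]) (use \<tau>0 in auto)
qed

lemma Sbar_solution_along_flow_line:
  assumes sol: "is_Sbar_solution \<eta> s0 s1 Omega0 u0 u" and Y: "flow_line Y" and t: "t \<in> {s0..s1}"
  shows "u t (Y t) = u0 (Y s0) * exp (integral {s0..t} (\<lambda>r. 2 * cos (Y r)))"
proof -
  have Yc: "charac \<eta> s0 s1 Y" and init: "u s0 (Y s0) = u0 (Y s0)"
    and u_deriv: "\<And>\<tau>. \<tau> \<in> {s0..s1} \<Longrightarrow>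
      ((\<lambda>\<tau>. u \<tau> (Y \<tau>)) has_real_derivative 2 * cos (Y \<tau>) * u \<tau> (Y \<tau>)) (at \<tau> within {s0..s1})"
    using sol Y unfolding is_Sbar_solution_def flow_line_def by blast+
  define P where "P \<tau> = integral {s0..\<tau>} (\<lambda>r. 2 * cos (Y r))" for \<tau>
  have "((\<lambda>\<tau>. u \<tau> (Y \<tau>) * exp (- P \<tau>)) has_real_derivative 0) (at \<tau> within {s0..s1})"
    if "\<tau> \<in> {s0..s1}" for \<tau>
    unfolding P_def using that
    by (auto intro!: derivative_eq_intros u_deriv integral_has_real_derivative continuous_intros
        charac_cont[OF Yc] simp: algebra_simps)
  then obtain c where "\<forall>\<tau>\<in>{s0..s1}. u \<tau> (Y \<tau>) * exp (- P \<tau>) = c"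
    using has_field_derivative_zero_constant[of "{s0..s1}"] by blast
  then have "u t (Y t) * exp (- P t) = u s0 (Y s0) * exp (- P s0)" using t s0_le_s1 by simp
  then show ?thesis using init by (simp add: P_def exp_minus field_simps)
qed

lemma nonneg_if_AE_weighted_bound:
  assumes "AE y in lborel. y \<in> Omega0 \<longrightarrow> \<bar>u0 y\<bar> \<le> M * Wt C \<theta> y"
  shows "0 \<le> M"
proof (rule ccontr)
  assume "\<not> 0 \<le> M"
  have pos: "0 < Wt C \<theta> y" if "y \<in> {1/2..1}" for y
  proof -
    have "0 < sin y" "0 < sin (y / 2)" using that pi_gt3 by (auto intro!: sin_gt_zero)
    then show ?thesis using that pi_gt3 by (simp add: Wt_eq_inner_weight inner_weight_def)
  qed
  have sub: "y \<in> Omega0" if "y \<in> {1/2..1}" for y by (rule Omega0_bounds) (use that pi_gt3 in auto)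
  from assms have "AE y in lborel. y \<notin> {1/2..1::real}"
  proof eventually_elim
    case (elim y)
    show ?case
    proof
      assume y: "y \<in> {1/2..1}"
      have "M * Wt C \<theta> y < 0" using pos[OF y] \<open>\<not> 0 \<le> M\<close> by (simp add: mult_neg_pos)
      then show False using elim sub[OF y] by simp
    qed
  qed
  then have "1 \<le> (1/2::real)" by (rule AE_not_in_Icc_imp_le)
  then show False by simp
qed

lemma negligible_flow_image:
  assumes "negligible N" and s: "s \<in> {s0..s1}"
  shows "negligible {Y s | Y. flow_line Y \<and> Y s0 \<in> N}"
proof -
  define S where "S = {y0 \<in> N. \<exists>Y. flow_line Y \<and> Y s0 = y0}"
  define flow where "flow y0 = (SOME Y. flow_line Y \<and> Y s0 = y0)" for y0
  have flow: "flow_line (flow y0) \<and> flow y0 s0 = y0" if y0: "y0 \<in> S" for y0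
  proof -
    obtain Y where "flow_line Y \<and> Y s0 = y0" using y0 by (auto simp: S_def)
    then show ?thesis unfolding flow_def by (rule someI[where P = "\<lambda>Y. flow_line Y \<and> Y s0 = y0"])
  qed
  have "negligible ((\<lambda>y0. flow y0 s) ` S)"
  proof (rule negligible_locally_Lipschitz_image)
    show "negligible S" using \<open>negligible N\<close> by (rule negligible_subset) (auto simp: S_def)
    fix x assume "x \<in> S"
    have "\<bar>flow y s - flow x s\<bar> \<le> exp ((1 + \<delta>) * (s - s0)) * \<bar>y - x\<bar>" if "y \<in> S" for y
      using flow_line_dist_le[OF conjunct1[OF flow[OF that]] conjunct1[OF flow[OF \<open>x \<in> S\<close>]] s]
        flow[OF that] flow[OF \<open>x \<in> S\<close>] by simp
    then show "\<exists>T B. open T \<and> x \<in> T \<and> (\<forall>y\<in>S \<inter> T. norm (flow y s - flow x s) \<le> B * norm (y - x))"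
      by (intro exI[of _ UNIV] exI[of _ "exp ((1 + \<delta>) * (s - s0))"]) auto
  qed simp
  moreover have "{Y s | Y. flow_line Y \<and> Y s0 \<in> N} \<subseteq> (\<lambda>y0. flow y0 s) ` S"
  proof clarify
    fix Y assume Y: "flow_line Y" "Y s0 \<in> N"
    then have "Y s0 \<in> S" by (auto simp: S_def)
    have "\<bar>flow (Y s0) s - Y s\<bar> \<le> exp ((1 + \<delta>) * (s - s0)) * \<bar>flow (Y s0) s0 - Y s0\<bar>"
      by (rule flow_line_dist_le[OF conjunct1[OF flow[OF \<open>Y s0 \<in> S\<close>]] Y(1) s])
    then have "flow (Y s0) s = Y s" using flow[OF \<open>Y s0 \<in> S\<close>] by simp
    with \<open>Y s0 \<in> S\<close> show "Y s \<in> (\<lambda>y0. flow y0 s) ` S" by force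
  qed
  ultimately show ?thesis by (rule negligible_subset)
qed

end

locale weighted_flow = char_flow \<eta> s0 s1 x0 \<delta> + weight_params C \<theta> \<theta>' \<delta>
  for \<eta> s0 s1 x0 \<delta> C \<theta> \<theta>'
begin

definition decay_factor :: "(real \<Rightarrow> real) \<Rightarrow> real \<Rightarrow> real" where
  "decay_factor Y \<tau> = exp (- (1 - \<theta>') * (\<tau> - s0) - integral {s0..\<tau>} (\<lambda>r. 2 * cos (Y r)))"

lemma decay_factor_has_real_derivative:
  assumes "charac \<eta> s0 s1 Y" "\<tau> \<in> {s0..s1}"
  shows "(decay_factor Y has_real_derivative decay_factor Y \<tau> * (- (1 - \<theta>') - 2 * cos (Y \<tau>)))
    (at \<tau> within {s0..s1})"
proof -
  have "continuous_on {s0..s1} (\<lambda>r. 2 * cos (Y r))" by (intro continuous_intros charac_cont assms(1))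
  then show ?thesis
    unfolding decay_factor_def using assms(2)
    by (auto intro!: derivative_eq_intros integral_has_real_derivative continuous_intros
        charac_cont[OF assms(1)] simp: algebra_simps)
qed

lemma weighted_branch_eventually_increasing:
  assumes Y: "flow_line Y" and \<tau>0: "\<tau>0 \<in> {s0..<s1}" and \<sigma>: "\<sigma> = 1 \<or> \<sigma> = -1"
    and branch: "\<And>z. z \<in> {lo..hi} \<Longrightarrow> Wt C \<theta> z = f z"
    and f': "(f has_real_derivative f' (\<sigma> * Y \<tau>0)) (at (\<sigma> * Y \<tau>0))"
    and super: "\<sigma> * Y \<tau>0 \<in> {lo..hi} \<Longrightarrow>
      0 < f' (\<sigma> * Y \<tau>0) * (sin (\<sigma> * Y \<tau>0) + \<sigma> * oint 0 (Y \<tau>0) (\<eta> \<tau>0))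
        - f (\<sigma> * Y \<tau>0) * (1 - \<theta>' + 2 * cos (\<sigma> * Y \<tau>0))"
  shows "eventually (\<lambda>\<tau>. \<sigma> * Y \<tau> \<in> {lo..hi} \<longrightarrow>
    Wt C \<theta> (Y \<tau>0) * decay_factor Y \<tau>0 < Wt C \<theta> (Y \<tau>) * decay_factor Y \<tau>) (at \<tau>0 within {\<tau>0<..s1})"
proof -
  have Yc: "charac \<eta> s0 s1 Y" using Y by (simp add: flow_line_def)
  have \<tau>0': "\<tau>0 \<in> {s0..s1}" using \<tau>0 by simp
  have Wt_branch: "Wt C \<theta> (Y \<tau>) = f (\<sigma> * Y \<tau>)" if "\<sigma> * Y \<tau> \<in> {lo..hi}" for \<tau>
    using branch[OF that] \<sigma> Wt_uminus[of C \<theta> "Y \<tau>"] by auto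
  show ?thesis
  proof (cases "\<sigma> * Y \<tau>0 \<in> {lo..hi}")
    case True
    let ?z = "\<sigma> * Y \<tau>0" and ?e = "\<sigma> * oint 0 (Y \<tau>0) (\<eta> \<tau>0)"
    have "sin ?z = \<sigma> * sin (Y \<tau>0)" "cos ?z = cos (Y \<tau>0)" using \<sigma> by auto
    moreover have "((\<lambda>\<tau>. \<sigma> * Y \<tau>) has_real_derivative \<sigma> * (sin (Y \<tau>0) + oint 0 (Y \<tau>0) (\<eta> \<tau>0)))
        (at \<tau>0 within {s0..s1})"
      by (rule DERIV_cmult[OF charac_deriv[OF Yc \<tau>0']])
    note DERIV_mult[OF DERIV_chain2[OF f' this] decay_factor_has_real_derivative[OF Yc \<tau>0']]
    ultimately have "((\<lambda>\<tau>. f (\<sigma> * Y \<tau>) * decay_factor Y \<tau>) has_real_derivative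
        decay_factor Y \<tau>0 * (f' ?z * (sin ?z + ?e) - f ?z * (1 - \<theta>' + 2 * cos ?z))) (at \<tau>0 within {s0..s1})"
      by (simp add: algebra_simps)
    moreover have "0 < decay_factor Y \<tau>0 * (f' ?z * (sin ?z + ?e) - f ?z * (1 - \<theta>' + 2 * cos ?z))"
      using super[OF True] by (simp add: decay_factor_def)
    ultimately have "eventually (\<lambda>\<tau>. f ?z * decay_factor Y \<tau>0 < f (\<sigma> * Y \<tau>) * decay_factor Y \<tau>)
        (at \<tau>0 within {\<tau>0<..s1})"
      by (rule has_real_derivative_pos_eventually_right[OF _ _ \<tau>0'])
    then show ?thesis by (rule eventually_mono) (use Wt_branch True in auto)
  next
    case False
    then have "eventually (\<lambda>\<tau>. \<sigma> * Y \<tau> \<in> - {lo..hi}) (at \<tau>0 within {\<tau>0<..s1})"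
      by (intro eventually_scaled_charac_in_open[OF Yc \<tau>0]) auto
    then show ?thesis by (rule eventually_mono) auto
  qed
qed

end

context weighted_flow
begin

lemma weighted_flow_line_locally_increasing:
  assumes Y: "flow_line Y" and \<tau>0: "\<tau>0 \<in> {s0..<s1}"
  shows "eventually (\<lambda>\<tau>. Wt C \<theta> (Y \<tau>0) * decay_factor Y \<tau>0 \<le> Wt C \<theta> (Y \<tau>) * decay_factor Y \<tau>)
    (at \<tau>0 within {\<tau>0<..s1})"
proof (cases "Y \<tau>0 = 0")
  case True
  have "Wt C \<theta> 0 = 0" by (simp add: Wt_eq_inner_weight inner_weight_def)
  then show ?thesis
    using True Wt_nonneg by (intro always_eventually) (simp add: decay_factor_def)
next
  case False
  define \<sigma> where "\<sigma> = sgn (Y \<tau>0)"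
  define z where "z = \<sigma> * Y \<tau>0"
  have \<tau>0': "\<tau>0 \<in> {s0..s1}" using \<tau>0 by simp
  have \<sigma>: "\<sigma> = 1 \<or> \<sigma> = -1" using False by (auto simp: \<sigma>_def sgn_if)
  have "z = \<bar>Y \<tau>0\<bar>" by (auto simp: z_def \<sigma>_def sgn_if)
  then have "0 < z" "z \<le> pi + 1/2" using False flow_line_bounded[OF Y \<tau>0'] by auto
  have e: "\<bar>\<sigma> * oint 0 (Y \<tau>0) (\<eta> \<tau>0)\<bar> \<le> \<delta> * z"
    using abs_oint_eta_le[OF Y \<tau>0'] \<sigma> \<open>z = \<bar>Y \<tau>0\<bar>\<close> by (auto simp: abs_mult)
  have "\<theta> \<noteq> 0" using theta_pos by simp
  note branch = weighted_branch_eventually_increasing[OF Y \<tau>0 \<sigma>, folded z_def]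
  let ?increases_on = "\<lambda>lo hi. eventually (\<lambda>\<tau>. \<sigma> * Y \<tau> \<in> {lo..hi} \<longrightarrow>
      Wt C \<theta> (Y \<tau>0) * decay_factor Y \<tau>0 < Wt C \<theta> (Y \<tau>) * decay_factor Y \<tau>) (at \<tau>0 within {\<tau>0<..s1})"
  have inner: "?increases_on 0 (2 * pi / 3)"
    by (rule branch[where f = "inner_weight C \<theta>"
          and f' = "\<lambda>z. (sin (z / 2))\<^sup>2 * (1 + 2 * cos z + C / \<theta> * sin z) * exp (C * z / \<theta>)",
          OF _ has_real_derivative_inner_weight[OF \<open>\<theta> \<noteq> 0\<close>]])
      (use inner_supersolution[OF \<open>0 < z\<close> _ e] in \<open>auto simp: Wt_eq_inner_weight\<close>)
  have outer: "?increases_on (2 * pi / 3) pi"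
    by (rule branch[where f = "outer_weight C \<theta>" and f' = "\<lambda>z. C / \<theta> * outer_weight C \<theta> z",
          OF _ has_real_derivative_outer_weight[OF \<open>\<theta> \<noteq> 0\<close>]])
      (use outer_supersolution[OF _ _ e] in \<open>auto simp: Wt_eq_outer_weight\<close>)
  have wrapped: "?increases_on pi (pi + 1)"
    by (rule branch[where f = "wrapped_weight C \<theta>" and f' = "\<lambda>z. - (C / \<theta>) * wrapped_weight C \<theta> z",
          OF _ has_real_derivative_wrapped_weight[OF \<open>\<theta> \<noteq> 0\<close>]])
      (use wrapped_supersolution[OF _ _ e] in \<open>auto simp: Wt_eq_wrapped_weight\<close>)
  have "eventually (\<lambda>\<tau>. \<sigma> * Y \<tau> \<in> {0<..<pi + 1}) (at \<tau>0 within {\<tau>0<..s1})"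
    using Y \<open>0 < z\<close> \<open>z \<le> pi + 1/2\<close> unfolding flow_line_def z_def
    by (intro eventually_scaled_charac_in_open[OF _ \<tau>0]) auto
  then show ?thesis using inner outer wrapped
  proof eventually_elim
    case (elim \<tau>)
    then have "\<sigma> * Y \<tau> \<in> {0..2 * pi / 3} \<or> \<sigma> * Y \<tau> \<in> {2 * pi / 3..pi} \<or> \<sigma> * Y \<tau> \<in> {pi..pi + 1}"
      by auto
    then show ?case using elim by (auto intro: less_imp_le)
  qed
qed

lemma weighted_flow_line_mono:
  assumes Y: "flow_line Y" and t: "t \<in> {s0..s1}"
  shows "Wt C \<theta> (Y s0) \<le> Wt C \<theta> (Y t) * decay_factor Y t"
proof -
  have Yc: "charac \<eta> s0 s1 Y" using Y by (simp add: flow_line_def)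
  have "continuous_on {s0..s1} (\<lambda>\<tau>. Wt C \<theta> (Y \<tau>))"
    by (rule continuous_on_compose2[OF continuous_on_Wt charac_cont[OF Yc]])
      (use theta_pos flow_line_bounded[OF Y] in \<open>force simp: abs_le_iff\<close>)+
  moreover have "continuous_on {s0..s1} (decay_factor Y)"
    by (rule DERIV_continuous_on[OF decay_factor_has_real_derivative[OF Yc]])
  ultimately have "Wt C \<theta> (Y s0) * decay_factor Y s0 \<le> Wt C \<theta> (Y t) * decay_factor Y t"
    using t weighted_flow_line_locally_increasing[OF Y]
    by (intro locally_right_nondecreasing_imp_mono[where g = "\<lambda>\<tau>. Wt C \<theta> (Y \<tau>) * decay_factor Y \<tau>"]
        continuous_intros) auto
  then show ?thesis by (simp add: decay_factor_def)
qed

lemma weighted_bound_on_flow_line: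
  assumes sol: "is_Sbar_solution \<eta> s0 s1 Omega0 u0 u" and Y: "flow_line Y"
    and init: "\<bar>u0 (Y s0)\<bar> \<le> M * Wt C \<theta> (Y s0)" and "0 \<le> M" and t: "t \<in> {s0..s1}"
  shows "\<bar>u t (Y t)\<bar> \<le> exp (- (1 - \<theta>') * (t - s0)) * M * Wt C \<theta> (Y t)"
proof -
  define P where "P = integral {s0..t} (\<lambda>r. 2 * cos (Y r))"
  have "\<bar>u t (Y t)\<bar> = \<bar>u0 (Y s0)\<bar> * exp P"
    using Sbar_solution_along_flow_line[OF sol Y t] by (simp add: P_def abs_mult)
  also have "\<dots> \<le> M * Wt C \<theta> (Y s0) * exp P" using init by simp
  also have "\<dots> \<le> M * (Wt C \<theta> (Y t) * decay_factor Y t) * exp P"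
    using weighted_flow_line_mono[OF Y t] \<open>0 \<le> M\<close> by (intro mult_right_mono mult_left_mono) auto
  also have "\<dots> = exp (- (1 - \<theta>') * (t - s0)) * M * Wt C \<theta> (Y t)"
    by (simp add: decay_factor_def P_def exp_diff)
  finally show ?thesis .
qed

lemma weighted_decay_AE:
  assumes sol: "is_Sbar_solution \<eta> s0 s1 Omega0 u0 u"
    and init: "AE y in lborel. y \<in> Omega0 \<longrightarrow> \<bar>u0 y\<bar> \<le> M * Wt C \<theta> y" and s: "s \<in> {s0..s1}"
  shows "AE y in lborel. y \<in> Omega_star \<eta> s0 s1 Omega0 s \<longrightarrow>
    \<bar>u s y\<bar> \<le> exp (- (1 - \<theta>') * (s - s0)) * M * Wt C \<theta> y"
proof -
  have "0 \<le> M" by (rule nonneg_if_AE_weighted_bound[OF init])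
  define N where "N = {y. \<not> (y \<in> Omega0 \<longrightarrow> \<bar>u0 y\<bar> \<le> M * Wt C \<theta> y)}"
  have "negligible N" using init unfolding N_def AE_lborel_iff_negligible .
  then have "negligible {Y s | Y. flow_line Y \<and> Y s0 \<in> N}" by (rule negligible_flow_image[OF _ s])
  moreover have "{y. \<not> (y \<in> Omega_star \<eta> s0 s1 Omega0 s \<longrightarrow>
      \<bar>u s y\<bar> \<le> exp (- (1 - \<theta>') * (s - s0)) * M * Wt C \<theta> y)} \<subseteq> {Y s | Y. flow_line Y \<and> Y s0 \<in> N}"
  proof
    fix y assume "y \<in> {y. \<not> (y \<in> Omega_star \<eta> s0 s1 Omega0 s \<longrightarrow>
      \<bar>u s y\<bar> \<le> exp (- (1 - \<theta>') * (s - s0)) * M * Wt C \<theta> y)}"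
    then obtain Y where Y: "flow_line Y" "y = Y s"
      and bad: "\<not> \<bar>u s (Y s)\<bar> \<le> exp (- (1 - \<theta>') * (s - s0)) * M * Wt C \<theta> (Y s)"
      unfolding Omega_star_def flow_line_def by blast
    have "Y s0 \<in> N"
    proof (rule ccontr)
      assume "Y s0 \<notin> N"
      then have "\<bar>u0 (Y s0)\<bar> \<le> M * Wt C \<theta> (Y s0)" using Y(1) by (auto simp: N_def flow_line_def)
      then show False using weighted_bound_on_flow_line[OF sol Y(1) _ \<open>0 \<le> M\<close> s] bad by simp
    qed
    then show "y \<in> {Y s | Y. flow_line Y \<and> Y s0 \<in> N}" using Y by blast
  qed
  ultimately show ?thesis unfolding AE_lborel_iff_negligible by (rule negligible_subset)
qed

end

lemma weighted_decay:
  assumes "1 \<le> C" "0 < \<theta>" "\<theta> < \<theta>'" "\<theta>' < 1" "0 < \<delta>" "\<delta> \<le> \<theta> * \<theta>' / (100 * C)"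
    and "s0 \<le> s1" "continuous_on ({s0..s1} \<times> UNIV) (\<lambda>(s, y). \<eta> s y)" "\<bar>x0\<bar> \<le> \<delta>"
    and "\<forall>s\<in>{s0..s1}. AE y in lborel.
      y \<in> Omega_star \<eta> s0 s1 {- pi - x0 .. pi - x0} s \<longrightarrow> \<bar>\<eta> s y\<bar> \<le> \<delta>"
    and sol: "is_Sbar_solution \<eta> s0 s1 {- pi - x0 .. pi - x0} u0 u"
    and init: "AE y in lborel. y \<in> {- pi - x0 .. pi - x0} \<longrightarrow> \<bar>u0 y\<bar> \<le> M * Wt C \<theta> y"
  shows "\<forall>s\<in>{s0..s1}. AE y in lborel. y \<in> Omega_star \<eta> s0 s1 {- pi - x0 .. pi - x0} s \<longrightarrow>
    \<bar>u s y\<bar> \<le> exp (- (1 - \<theta>') * (s - s0)) * M * Wt C \<theta> y"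
proof -
  have "\<theta> * \<theta>' / (100 * C) \<le> 1 / 100"
    using assms(1-4) mult_strict_mono[of \<theta> 1 \<theta>' 1] by (simp add: field_simps)
  then have "\<delta> \<le> 1 / 100" using assms(6) by linarith
  then interpret weighted_flow \<eta> s0 s1 x0 \<delta> C \<theta> \<theta>'
    using assms by unfold_locales auto
  show ?thesis using weighted_decay_AE[OF sol init] by blast
qed

theorem lemma3p5:
  "\<exists>C0>0. \<forall>C\<ge>C0. \<forall>\<theta> \<theta>'. 0 < \<theta> \<and> \<theta> < \<theta>' \<and> \<theta>' < 1 \<longrightarrow>
    (\<exists>\<delta>0>0. \<forall>\<delta>. 0 < \<delta> \<and> \<delta> \<le> \<delta>0 \<longrightarrow>
      (\<forall>(s0::real) s1 (\<eta>::real \<Rightarrow> real \<Rightarrow> real) (xs::real \<Rightarrow> real)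
          (u0::real \<Rightarrow> real) (u::real \<Rightarrow> real \<Rightarrow> real) (M::real).
         0 \<le> s0 \<and> s0 \<le> s1 \<and>
         continuous_on ({s0..s1} \<times> UNIV) (\<lambda>(s, y). \<eta> s y) \<and>
         (\<forall>s\<in>{s0..s1}. (xs has_real_derivative
              (- sin (xs s) + oint (- pi - xs s) 0 (\<eta> s))) (at s within {s0..s1})) \<and>
         (\<forall>s\<in>{s0..s1}. \<bar>xs s\<bar> \<le> \<delta>) \<and>
         (\<forall>s\<in>{s0..s1}. AE y in lborel.
              y \<in> Omega_star \<eta> s0 s1 {- pi - xs s0 .. pi - xs s0} s \<longrightarrow> \<bar>\<eta> s y\<bar> \<le> \<delta>) \<and>
         is_Sbar_solution \<eta> s0 s1 {- pi - xs s0 .. pi - xs s0} u0 u \<and>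
         (AE y in lborel. y \<in> {- pi - xs s0 .. pi - xs s0} \<longrightarrow> \<bar>u0 y\<bar> \<le> M * Wt C \<theta> y)
         \<longrightarrow>
         (\<forall>s\<in>{s0..s1}. AE y in lborel.
              y \<in> Omega_star \<eta> s0 s1 {- pi - xs s0 .. pi - xs s0} s \<longrightarrow>
              \<bar>u s y\<bar> \<le> exp (- (1 - \<theta>') * (s - s0)) * M * Wt C \<theta> y)))"
proof (rule exI[of _ "1::real"], intro conjI allI impI, goal_cases)
  case 1
  show ?case by simp
next
  case (2 C \<theta> \<theta>')
  note params = this
  show ?case
  proof (rule exI[of _ "\<theta> * \<theta>' / (100 * C)"], intro conjI allI impI, goal_cases)
    case 1
    show ?case using params by simp
  next
    case (2 \<delta> s0 s1 \<eta> xs u0 u M)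
    then show ?case by (intro weighted_decay[where \<delta> = \<delta>]) (use params in auto)
  qed
qed

end
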